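(* Let $X,Y$ be $c$-free with respect to $(\varphi,\psi)$ on $\mathbb{C}\langle X,Y\rangle$, $A,B\in M_N(\mathbb{C})$, $\mathbf{\Psi}=(I-z(AX+BY))^{-1}$. With $F_Y=\beta^{\delta,\psi}_Y(Y\mathbf{\Psi})$, $F^\varphi_X=\beta^{\delta,\varphi}_X(X\mathbf{\Psi})$, $F^\varphi_Y=\beta^{\delta,\varphi}_Y(Y\mathbf{\Psi})$, $$\overrightarrow{E}^\varphi_X[\mathbf{\Psi}]=(I-zAF^\varphi_X-zBF^\varphi_Y)^{-1}(I-zAF^\varphi_X-zBF_Y)(I-zAX-zBF_Y)^{-1}.$$
   Context: $X,Y$ $c$-free w.r.t. $(\varphi,\psi)$: $\psi(u_1\cdots u_n)=0$ and $\varphi(u_1\cdots u_n)=\prod\varphi(u_j)$ whenever the $u_j$ alternate between $\mathbb{C}\langle X\rangle$, $\mathbb{C}\langle Y\rangle$ with $\psi(u_j)=0$. Boolean cumulants: $\theta(a_1\cdots a_n)=\sum_k\beta^\theta_k(a_1,\dots,a_k)\theta(a_{k+1}\cdots a_n)$. $\beta^{\delta,\theta}_X(1)=1$, $\beta^{\delta,\theta}_X(Z_1\cdots Z_k)=\beta^\theta_k(Z_1,\dots,Z_k)$ if $Z_1=Z_k=X$, else $0$ (similarly for $Y$). $\beta^{b,\theta}_X(1)=1$ and for a monomial with block factorization $W=U_1\cdots U_n$ (alternating nonempty pure monomials), $\beta^{b,\theta}_X(W)=\beta^\theta_n(U_1,\dots,U_n)$ if $W$ starts and ends with $X$, else $0$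 (similarly $Y$). $\overrightarrow{\delta}_X(W)=\sum_{W=UXV}U\otimes XV$. $E^\psi_X$ is the linear map with $E^\psi_X[X_0]=X_0$ and for $W=X_0Y_1X_1\cdots Y_nX_n$ in block form ($n\ge1$, $X_0,X_n$ possibly $1$) $E^\psi_X[W]=\sum_{p=0}^{n-1}\sum_{0=i_0<i_1<\dots<i_{p+1}=n}X_0X_{i_1}\cdots X_{i_p}X_n\prod_{j=0}^p\beta^\psi_{2(i_{j+1}-i_j)-1}(Y_{i_j+1},X_{i_j+1},\dots,Y_{i_{j+1}})$. $\overrightarrow{E}^\varphi_X:\mathbb{C}\langle X,Y\rangle\to\mathbb{C}\langle X\rangle$ is the linear map defined recursively by: $\overrightarrow{E}^\varphi_X[P(X)]=P(X)$; $\overrightarrow{E}^\varphi_X[P(Y)]=\varphi(P(Y))$; for monomials $W$ starting with $Y$, $\overrightarrow{E}^\varphi_X[W]=\beta^{b,\varphi}_Y(W)+(\beta^{b,\varphi}_Y\otimes\overrightarrow{E}^\varphi_X)[\overrightarrow{\delta}_XW]$; for $W$ starting with $X$, $\overrightarrow{E}^\varphi_X[W]=E^\psi_X[W]+(\beta^{b,\varphi}_X\otimes(\overrightarrow{E}^\varphi_X-E^\psi_X))[\overrightarrow{\delta}_YW]$. All maps act entrywise on matrices and coefficientwise on formal power series in $z$; $\mathbf{\Psi}=\sum_nz^n(AX+BY)^n$ and inverses are formal power series inverses. *)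

theory Defs
  imports "HOL-Analysis.Analysis" "HOL-Library.Poly_Mapping"
begin

datatype letter = LX | LY

text \<open>Monomials of C<X,Y>: words over {X,Y}, wrapped so that + is concatenation
  (the free monoid); C<X,Y> is then the monoid algebra nword =>0 complex.\<close>
datatype nword = NW "letter list"

fun word_of :: "nword \<Rightarrow> letter list" where "word_of (NW w) = w"

instantiation nword :: monoid_add
begin
definition zero_nword_def: "0 = NW []"
definition plus_nword_def: "u + v = NW (word_of u @ word_of v)"
instance
proof
  fix a b c :: nword
  show "a + b + c = a + (b + c)" by (cases a; cases b; cases c) (simp add: plus_nword_def)
  show "0 + a = a" by (cases a) (simp add: plus_nword_def zero_nword_def)
  show "a + 0 = a" by (cases a) (simp add: plus_nword_def zero_nword_def)
qed
end

type_synonym ncpoly = "nword \<Rightarrow>\<^sub>0 complex"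

definition mono :: "letter list \<Rightarrow> ncpoly" where
  "mono w = Poly_Mapping.single (NW w) 1"

definition pc :: "complex \<Rightarrow> ncpoly" where
  "pc c = Poly_Mapping.single (0::nword) c"

definition lin :: "(letter list \<Rightarrow> complex) \<Rightarrow> ncpoly \<Rightarrow> complex" where
  "lin f p = (\<Sum>w\<in>Poly_Mapping.keys p. Poly_Mapping.lookup p w * f (word_of w))"

definition linP :: "(letter list \<Rightarrow> ncpoly) \<Rightarrow> ncpoly \<Rightarrow> ncpoly" where
  "linP f p = (\<Sum>w\<in>Poly_Mapping.keys p. pc (Poly_Mapping.lookup p w) * f (word_of w))"

definition in_alg :: "letter \<Rightarrow> ncpoly \<Rightarrow> bool" where
  "in_alg a p = (\<forall>w\<in>Poly_Mapping.keys p. set (word_of w) \<subseteq> {a})"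

text \<open>c-freeness of X, Y w.r.t. (phi, psi); phi, psi are given by their values on monomials.\<close>
definition cfree :: "(letter list \<Rightarrow> complex) \<Rightarrow> (letter list \<Rightarrow> complex) \<Rightarrow> bool" where
  "cfree \<phi> \<psi> = (\<forall>us ls. us \<noteq> [] \<and> length us = length ls
      \<and> (\<forall>i. Suc i < length ls \<longrightarrow> ls ! i \<noteq> ls ! Suc i)
      \<and> (\<forall>i<length us. in_alg (ls ! i) (us ! i) \<and> lin \<psi> (us ! i) = 0)
      \<longrightarrow> lin \<psi> (prod_list us) = 0 \<and> lin \<phi> (prod_list us) = (\<Prod>u\<leftarrow>us. lin \<phi> u))"

section \<open>Boolean cumulants (on monomial arguments; multilinear extension implicit)\<close>

function bcum :: "(letter list \<Rightarrow> complex) \<Rightarrow> letter list list \<Rightarrow> complex" where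
  "bcum \<theta> us = \<theta> (concat us)
     - (\<Sum>k\<in>{1..<length us}. bcum \<theta> (take k us) * \<theta> (concat (drop k us)))"
  by pat_completeness auto
termination by (relation "Wellfounded.measure (\<lambda>(_, us). length us)") auto

text \<open>Maximal block factorization of a monomial into pure nonempty blocks.\<close>
fun blocks :: "letter list \<Rightarrow> letter list list" where
  "blocks [] = []"
| "blocks (a # w) = (case blocks w of [] \<Rightarrow> [[a]]
      | u # us \<Rightarrow> if hd u = a then (a # u) # us else [a] # u # us)"

definition bdelta :: "(letter list \<Rightarrow> complex) \<Rightarrow> letter \<Rightarrow> letter list \<Rightarrow> complex" where
  "bdelta \<theta> a w = (if w = [] then 1
     else if hd w = a \<and> last w = a then bcum \<theta> (map (\<lambda>x. [x]) w) else 0)"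

definition bblock :: "(letter list \<Rightarrow> complex) \<Rightarrow> letter \<Rightarrow> letter list \<Rightarrow> complex" where
  "bblock \<theta> a w = (if w = [] then 1
     else if hd w = a \<and> last w = a then bcum \<theta> (blocks w) else 0)"

text \<open>A word starting with Y (or empty), Y1 X1 ... Yn Xn, parsed into the pairs (Yi, Xi).\<close>
lemma parse_dec:
  "w \<noteq> [] \<Longrightarrow> length (dropWhile (\<lambda>c. c = LX) (dropWhile (\<lambda>c. c = LY) w)) < length w"
proof (cases w)
  case (Cons a w')
  then show ?thesis
    using length_dropWhile_le[of "\<lambda>c. c = LX" w'] length_dropWhile_le[of "\<lambda>c. c = LY" w']
          length_dropWhile_le[of "\<lambda>c. c = LX" "dropWhile (\<lambda>c. c = LY) w'"]
    by (cases a) auto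
qed simp

function parse_pairs :: "letter list \<Rightarrow> (letter list \<times> letter list) list" where
  "parse_pairs w = (if w = [] then [] else
     (let y = takeWhile (\<lambda>c. c = LY) w; r = dropWhile (\<lambda>c. c = LY) w;
          x = takeWhile (\<lambda>c. c = LX) r; r' = dropWhile (\<lambda>c. c = LX) r
      in (y, x) # parse_pairs r'))"
  by pat_completeness auto
termination
  by (relation "Wellfounded.measure length") (auto intro: parse_dec)

text \<open>Tokens Y_a, X_a, ..., X_{b-1}, Y_b of a group of consecutive pairs.\<close>
definition gtok :: "(letter list \<times> letter list) list \<Rightarrow> letter list list" where
  "gtok ps = butlast (concat (map (\<lambda>(y, x). [y, x]) ps))"

text \<open>Sum over all cuts 0 = i_0 < ... < i_{p+1} = n of the pairs into consecutive groups.\<close>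
function Ggrp :: "(letter list \<Rightarrow> complex) \<Rightarrow> (letter list \<times> letter list) list \<Rightarrow> ncpoly" where
  "Ggrp \<psi> ps = (if ps = [] then 1 else
     (\<Sum>k\<in>{1..length ps}. pc (bcum \<psi> (gtok (take k ps))) * mono (snd (last (take k ps)))
                             * Ggrp \<psi> (drop k ps)))"
  by pat_completeness auto
termination by (relation "Wellfounded.measure (\<lambda>(_, ps). length ps)") auto

definition Epsi :: "(letter list \<Rightarrow> complex) \<Rightarrow> letter list \<Rightarrow> ncpoly" where
  "Epsi \<psi> w = mono (takeWhile (\<lambda>c. c = LX) w) * Ggrp \<psi> (parse_pairs (dropWhile (\<lambda>c. c = LX) w))"

function Ephi :: "(letter list \<Rightarrow> complex) \<Rightarrow> (letter list \<Rightarrow> complex) \<Rightarrow> letter list \<Rightarrow> ncpoly" where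
  "Ephi \<phi> \<psi> w =
    (if set w \<subseteq> {LX} then mono w
     else if set w \<subseteq> {LY} then pc (\<phi> w)
     else if hd w = LY then
       pc (bblock \<phi> LY w)
       + (\<Sum>k\<in>{k\<in>{1..<length w}. w ! k = LX}. pc (bblock \<phi> LY (take k w)) * Ephi \<phi> \<psi> (drop k w))
     else
       Epsi \<psi> w
       + (\<Sum>k\<in>{k\<in>{1..<length w}. w ! k = LY}.
            pc (bblock \<phi> LX (take k w)) * (Ephi \<phi> \<psi> (drop k w) - Epsi \<psi> (drop k w))))"
  by pat_completeness auto
termination by (relation "Wellfounded.measure (\<lambda>(_, _, w). length w)") auto

section \<open>Matrices (N x N, N = CARD('n)) and formal power series in z\<close>

fun mpow :: "ncpoly^'n::finite^'n \<Rightarrow> nat \<Rightarrow> ncpoly^'n^'n" where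
  "mpow M 0 = mat 1"
| "mpow M (Suc k) = M ** mpow M k"

definition mapm :: "('a \<Rightarrow> 'b) \<Rightarrow> 'a^'n^'m \<Rightarrow> 'b^'n^'m" where
  "mapm f M = (\<chi> i j. f (M $ i $ j))"

definition liftm :: "complex^'n^'m \<Rightarrow> ncpoly^'n^'m" where
  "liftm M = mapm pc M"

type_synonym ('n) mps = "nat \<Rightarrow> ncpoly^'n^'n"

definition sone :: "('n::finite) mps" where
  "sone k = (if k = 0 then mat 1 else 0)"

definition smult :: "('n::finite) mps \<Rightarrow> ('n::finite) mps \<Rightarrow> ('n::finite) mps" where
  "smult P Q k = (\<Sum>i\<le>k. P i ** Q (k - i))"

definition sinv :: "('n::finite) mps \<Rightarrow> ('n::finite) mps" where
  "sinv P = (THE Q. smult P Q = sone \<and> smult Q P = sone)"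

definition zs :: "('n::finite) mps \<Rightarrow> ('n::finite) mps" where
  "zs P k = (if k = 0 then 0 else P (k - 1))"

text \<open>AX + BY as a matrix over C<X,Y>, and Psi = sum_n z^n (AX+BY)^n.\<close>
definition AXBY :: "complex^'n^'n \<Rightarrow> complex^'n^'n \<Rightarrow> ncpoly^'n^'n" where
  "AXBY A B = (\<chi> i j. pc (A $ i $ j) * mono [LX] + pc (B $ i $ j) * mono [LY])"

definition Psi :: "complex^'n^'n \<Rightarrow> complex^'n^'n \<Rightarrow> ('n::finite) mps" where
  "Psi A B k = mpow (AXBY A B) k"

text \<open>F = beta^{delta,theta}_a (a Psi), coefficientwise and entrywise.\<close>
definition Fd :: "(letter list \<Rightarrow> complex) \<Rightarrow> letter \<Rightarrow> complex^'n^'n \<Rightarrow> complex^'n^'n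
    \<Rightarrow> nat \<Rightarrow> complex^'n^'n" where
  "Fd \<theta> a A B k = mapm (\<lambda>p. lin (bdelta \<theta> a) (mono [a] * p)) (Psi A B k)"

end

theory Submission
  imports Defs
begin

text \<open>Both sides are generating series \<open>\<Sum>\<^sub>w z\<^bsup>|w|\<^esup> M\<^sub>w \<otimes> f(w)\<close> over words \<open>w\<close> in \<open>X, Y\<close>, where \<open>M\<^sub>w\<close> is
  the product of the matrices \<open>A\<close>, \<open>B\<close> read off from \<open>w\<close>; such series multiply by convolving their
  coefficient functions \<open>f\<close>. The theorem thus reduces to two convolution identities on words, which
  are recursions for \<open>E\<^sup>\<phi>\<^sub>X\<close> and \<open>E\<^sup>\<psi>\<^sub>X\<close> driven by the Boolean cumulants \<open>\<beta>\<^sup>\<delta>\<close> of single letters.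
  The defining recursions of \<open>E\<^sup>\<phi>\<^sub>X\<close> and \<open>E\<^sup>\<psi>\<^sub>X\<close> use the block cumulants \<open>\<beta>\<^sup>b\<close> instead, and the two
  kinds of cumulants are related as soon as cumulants of letters whose first and last letter
  differ vanish. This vanishing is where c-freeness enters: writing \<open>\<beta>\<^sub>n(u\<^sub>1, \<dots>, u\<^sub>n)\<close> as \<open>\<theta>\<close>
  applied to the nested centering \<open>(\<dots>((u\<^sub>1 - \<theta> u\<^sub>1) u\<^sub>2 - \<dots>) \<dots>) u\<^sub>n\<close>, the nested centering of a word
  of letters is a sum of alternating products of centered elements, which \<open>\<phi>\<close> and \<open>\<psi>\<close> annihilate,
  plus a constant that vanishes when the first and last letter differ.\<close>

section \<open>Noncommutative polynomials and linear extensions\<close>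

lemma mono_mult: "mono u * mono v = mono (u @ v)"
  by (simp add: mono_def mult_single plus_nword_def)

lemma mono_Nil [simp]: "mono [] = 1"
  by (simp add: mono_def flip: zero_nword_def)

lemma pc_0 [simp]: "pc 0 = 0"
  by (simp add: pc_def)

lemma pc_1 [simp]: "pc 1 = 1"
  by (simp add: pc_def)

lemma pc_mult: "pc a * pc b = pc (a * b)"
  by (simp add: pc_def mult_single)

lemma pc_add: "pc (a + b) = pc a + pc b"
  by (simp add: pc_def single_add)

lemma pc_uminus: "pc (- a) = - pc a"
  by (simp add: pc_def single_uminus)

lemma pc_sum: "pc (sum f S) = (\<Sum>x\<in>S. pc (f x))"
  by (induction S rule: infinite_finite_induct) (auto simp: pc_add)

lemma lookup_pc_mult: "Poly_Mapping.lookup (pc c * p) w = c * Poly_Mapping.lookup p w"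
  by (simp add: pc_def flip: mult_map_scale_conv_mult) (simp add: map.rep_eq when_def)

lemma lookup_mult_pc: "Poly_Mapping.lookup (p * pc c) w = Poly_Mapping.lookup p w * c"
proof -
  have "(\<Sum>v. Poly_Mapping.lookup (pc c) v when w = u + v) = Sum_any (\<lambda>v::nword. if v = 0 then (c when w = u) else 0)" for u
    by (rule Sum_any.cong) (simp add: pc_def lookup_single when_def)
  then have "(\<Sum>v. Poly_Mapping.lookup (pc c) v when w = u + v) = (c when w = u)" for u
    by simp
  then show ?thesis
    by (simp add: lookup_mult mult_when)
qed

lemma pc_central: "pc c * p = p * pc c"
  by (rule poly_mapping_eqI) (simp add: lookup_pc_mult lookup_mult_pc mult.commute)

lemma sum_keys_superset:
  fixes g :: "nword \<Rightarrow> complex \<Rightarrow> 'b::comm_monoid_add"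
  assumes "finite K" "Poly_Mapping.keys p \<subseteq> K" "\<And>w. g w 0 = 0"
  shows "(\<Sum>w\<in>Poly_Mapping.keys p. g w (Poly_Mapping.lookup p w))
       = (\<Sum>w\<in>K. g w (Poly_Mapping.lookup p w))"
  by (rule sum.mono_neutral_left) (use assms in \<open>auto simp: in_keys_iff\<close>)

lemma sum_keys_add:
  fixes g :: "nword \<Rightarrow> complex \<Rightarrow> 'b::comm_monoid_add"
  assumes "\<And>w. g w 0 = 0" "\<And>w a b. g w (a + b) = g w a + g w b"
  shows "(\<Sum>w\<in>Poly_Mapping.keys (p + q). g w (Poly_Mapping.lookup (p + q) w))
       = (\<Sum>w\<in>Poly_Mapping.keys p. g w (Poly_Mapping.lookup p w))
         + (\<Sum>w\<in>Poly_Mapping.keys q. g w (Poly_Mapping.lookup q w))"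
proof -
  let ?K = "Poly_Mapping.keys p \<union> Poly_Mapping.keys q"
  have "(\<Sum>w\<in>Poly_Mapping.keys (p + q). g w (Poly_Mapping.lookup (p + q) w))
      = (\<Sum>w\<in>?K. g w (Poly_Mapping.lookup (p + q) w))"
    by (rule sum_keys_superset) (auto simp: keys_add assms(1))
  also have "\<dots> = (\<Sum>w\<in>?K. g w (Poly_Mapping.lookup p w)) + (\<Sum>w\<in>?K. g w (Poly_Mapping.lookup q w))"
    by (simp add: lookup_add assms(2) sum.distrib)
  finally show ?thesis
    by (simp add: sum_keys_superset[of ?K] assms(1))
qed

lemma sum_keys_pc_mult:
  fixes g :: "nword \<Rightarrow> complex \<Rightarrow> 'b::comm_monoid_add"
  assumes "\<And>w. g w 0 = 0"
  shows "(\<Sum>w\<in>Poly_Mapping.keys (pc c * p). g w (Poly_Mapping.lookup (pc c * p) w))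
       = (\<Sum>w\<in>Poly_Mapping.keys p. g w (c * Poly_Mapping.lookup p w))"
  by (subst sum_keys_superset[of "Poly_Mapping.keys p"])
     (auto simp: in_keys_iff lookup_pc_mult assms)

lemma lin_zero [simp]: "lin f 0 = 0"
  by (simp add: lin_def)

lemma lin_add: "lin f (p + q) = lin f p + lin f q"
  unfolding lin_def by (rule sum_keys_add) (simp_all add: distrib_right)

lemma lin_scale: "lin f (pc c * p) = c * lin f p"
  unfolding lin_def using sum_keys_pc_mult[of "\<lambda>w a. a * f (word_of w)" c p]
  by (simp add: sum_distrib_left mult.assoc)

lemma lin_mono: "lin f (mono w) = f w"
  by (simp add: lin_def mono_def)

lemma lin_pc: "lin f (pc c) = c * f []"
  using lin_scale[of f c 1] lin_mono[of f "[]"] by simp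

lemma lin_sum: "lin f (sum g S) = (\<Sum>x\<in>S. lin f (g x))"
  by (induction S rule: infinite_finite_induct) (auto simp: lin_add)

lemma lin_diff: "lin f (p - q) = lin f p - lin f q"
proof -
  have "p - q = p + pc (- 1) * q"
    by (simp add: pc_uminus)
  then show ?thesis
    by (simp only: lin_add lin_scale) simp
qed

lemma linP_zero [simp]: "linP f 0 = 0"
  by (simp add: linP_def)

lemma linP_add: "linP f (p + q) = linP f p + linP f q"
  unfolding linP_def by (rule sum_keys_add) (simp_all add: pc_add distrib_right)

lemma linP_scale: "linP f (pc c * p) = pc c * linP f p"
  unfolding linP_def using sum_keys_pc_mult[of "\<lambda>w a. pc a * f (word_of w)" c p]
  by (simp add: sum_distrib_left mult.assoc flip: pc_mult)

lemma linP_mono: "linP f (mono w) = f w"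
  by (simp add: linP_def mono_def)

lemma linP_sum: "linP f (sum g S) = (\<Sum>x\<in>S. linP f (g x))"
  by (induction S rule: infinite_finite_induct) (auto simp: linP_add)

section \<open>Boolean cumulants as nested centerings\<close>

declare bcum.simps [simp del]

definition center :: "(letter list \<Rightarrow> complex) \<Rightarrow> ncpoly \<Rightarrow> ncpoly" where
  "center \<theta> p = p - pc (lin \<theta> p)"

fun centered_chain :: "(letter list \<Rightarrow> complex) \<Rightarrow> letter list list \<Rightarrow> ncpoly" where
  "centered_chain \<theta> [] = 1"
| "centered_chain \<theta> (u # us) = foldl (\<lambda>p v. center \<theta> p * mono v) (mono u) us"

lemma centered_chain_snoc:
  "us \<noteq> [] \<Longrightarrow> centered_chain \<theta> (us @ [u]) = center \<theta> (centered_chain \<theta> us) * mono u"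
  by (cases us) auto

lemma center_0 [simp]: "center \<theta> 0 = 0"
  by (simp add: center_def)

lemma center_add: "center \<theta> (p + q) = center \<theta> p + center \<theta> q"
  by (simp add: center_def lin_add pc_add)

lemma center_pc_mult: "center \<theta> (pc a * p) = pc a * center \<theta> p"
  by (simp add: center_def lin_scale pc_mult right_diff_distrib)

lemma center_sum: "center \<theta> (sum f S) = (\<Sum>x\<in>S. center \<theta> (f x))"
  by (induction S rule: infinite_finite_induct) (auto simp: center_add)

lemma lin_centered_chain_mult_mono:
  assumes "us \<noteq> []"
  shows "lin \<theta> (centered_chain \<theta> us * mono u) = \<theta> (concat us @ u)
           - (\<Sum>k\<in>{1..<length us}. bcum \<theta> (take k us) * \<theta> (concat (drop k us) @ u))"
  using assms
proof (induction us arbitrary: u rule: rev_induct)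
  case Nil
  then show ?case by simp
next
  case (snoc x us)
  show ?case
  proof (cases "us = []")
    case True
    then show ?thesis by (simp add: mono_mult lin_mono)
  next
    case False
    let ?F = "\<lambda>k. bcum \<theta> (take k (us @ [x])) * \<theta> (concat (drop k (us @ [x])) @ u)"
    have bcum_us: "bcum \<theta> us = lin \<theta> (centered_chain \<theta> us)"
      using snoc.IH[OF False, of "[]"] by (simp add: bcum.simps[of \<theta> us])
    have "lin \<theta> (centered_chain \<theta> (us @ [x]) * mono u)
        = lin \<theta> (centered_chain \<theta> us * mono (x @ u)) - bcum \<theta> us * \<theta> (x @ u)"
      using False
      by (simp add: centered_chain_snoc center_def mult.assoc mono_mult left_diff_distrib
          lin_diff lin_scale lin_mono bcum_us)
    also have "\<dots> = \<theta> (concat (us @ [x]) @ u)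
        - ((\<Sum>k\<in>{1..<length us}. ?F k) + ?F (length us))"
      using snoc.IH[OF False, of "x @ u"] by simp
    also have "(\<Sum>k\<in>{1..<length us}. ?F k) + ?F (length us) = (\<Sum>k\<in>{1..<length (us @ [x])}. ?F k)"
      using False by (simp add: sum.atLeastLessThan_Suc Suc_le_eq)
    finally show ?thesis .
  qed
qed

lemma bcum_centered_chain: "us \<noteq> [] \<Longrightarrow> bcum \<theta> us = lin \<theta> (centered_chain \<theta> us)"
  using lin_centered_chain_mult_mono[of us \<theta> "[]"] by (simp add: bcum.simps[of \<theta> us])

lemma blocks_ConsE:
  assumes "w \<noteq> []"
  obtains u us where "blocks w = u # us" "u \<noteq> []" "hd u = hd w"
  using assms
proof (induction w arbitrary: thesis)
  case (Cons a w)
  show ?case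
  proof (cases "w = []")
    case False
    then obtain u us where "blocks w = u # us" "u \<noteq> []" "hd u = hd w"
      using Cons.IH by blast
    then show ?thesis
      using Cons.prems(1) by (cases "hd u = a") auto
  qed (use Cons.prems(1) in simp)
qed simp

lemma blocks_eq_Nil_iff [simp]: "blocks w = [] \<longleftrightarrow> w = []"
  by (cases w) (auto split: list.split)

lemma blocks_snoc:
  "w \<noteq> [] \<Longrightarrow> blocks (w @ [c]) = (if last w = c then butlast (blocks w) @ [last (blocks w) @ [c]]
                                     else blocks w @ [[c]])"
proof (induction w)
  case (Cons a w)
  show ?case
  proof (cases "w = []")
    case False
    then obtain u us where "blocks w = u # us" "u \<noteq> []" "hd u = hd w"
      by (rule blocks_ConsE)
    with Cons.IH False show ?thesis
      by (cases "us = []") auto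
  qed auto
qed simp

lemma blocks_pure: "w \<noteq> [] \<Longrightarrow> set w \<subseteq> {a} \<Longrightarrow> blocks w = [w]"
proof (induction w)
  case (Cons b w)
  then show ?case by (cases w) auto
qed simp

lemma blocks_append:
  "u \<noteq> [] \<Longrightarrow> v \<noteq> [] \<Longrightarrow> last u \<noteq> hd v \<Longrightarrow> blocks (u @ v) = blocks u @ blocks v"
proof (induction u)
  case (Cons a u)
  show ?case
  proof (cases "u = []")
    case True
    obtain b bs where "blocks v = b # bs" "hd b = hd v"
      using blocks_ConsE[OF Cons.prems(2)] by blast
    with True Cons.prems show ?thesis by simp
  next
    case False
    obtain b bs where "blocks u = b # bs" "hd b = hd u"
      using blocks_ConsE[OF False] by blast
    with False Cons show ?thesis by simp
  qed
qed simp

lemma centered_chain_append_letter: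
  "centered_chain \<theta> (vs @ [u @ [c]]) = centered_chain \<theta> (vs @ [u]) * mono [c]"
  by (cases "vs = []") (auto simp: centered_chain_snoc mono_mult mult.assoc)

lemma centered_chain_blocks_snoc:
  assumes "w \<noteq> []"
  shows "centered_chain \<theta> (blocks (w @ [c]))
       = (if last w = c then centered_chain \<theta> (blocks w) else center \<theta> (centered_chain \<theta> (blocks w)))
         * mono [c]"
proof (cases "last w = c")
  case True
  have "blocks w = butlast (blocks w) @ [last (blocks w)]"
    using assms by simp
  then show ?thesis
    using assms True
    by (simp add: blocks_snoc centered_chain_append_letter del: append_butlast_last_id)
qed (use assms in \<open>simp add: blocks_snoc centered_chain_snoc\<close>)

definition bcum_letters :: "(letter list \<Rightarrow> complex) \<Rightarrow> letter list \<Rightarrow> complex" where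
  "bcum_letters \<theta> w = bcum \<theta> (map (\<lambda>x. [x]) w)"

definition inner_cuts :: "letter list \<Rightarrow> nat set" where
  "inner_cuts w = {j\<in>{1..<length w}. w ! (j - 1) = w ! j}"

lemma finite_inner_cuts [simp]: "finite (inner_cuts w)"
  by (simp add: inner_cuts_def)

lemma inner_cuts_snoc:
  assumes "w \<noteq> []"
  shows "inner_cuts (w @ [c]) = (if last w = c then insert (length w) (inner_cuts w) else inner_cuts w)"
  using assms
  by (auto simp: inner_cuts_def nth_append last_conv_nth less_Suc_eq Suc_le_eq split: if_splits)

lemma centered_chain_blocks_expansion:
  assumes "w \<noteq> []"
  shows "centered_chain \<theta> (blocks w) = centered_chain \<theta> (map (\<lambda>x. [x]) w)
           + (\<Sum>j\<in>inner_cuts w. pc (bcum_letters \<theta> (take j w)) * centered_chain \<theta> (blocks (drop j w)))"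
  using assms
proof (induction w rule: rev_induct)
  case (snoc c w)
  let ?B = "\<lambda>w. centered_chain \<theta> (blocks w)" and ?L = "\<lambda>w. centered_chain \<theta> (map (\<lambda>x. [x]) w)"
  let ?S = "\<lambda>w. \<Sum>j\<in>inner_cuts w. pc (bcum_letters \<theta> (take j w)) * ?B (drop j w)"
  show ?case
  proof (cases "w = []")
    case True
    then show ?thesis by (simp add: inner_cuts_def)
  next
    case False
    then have IH: "?B w = ?L w + ?S w"
      using snoc.IH by simp
    have old_cuts: "(\<Sum>j\<in>inner_cuts w. pc (bcum_letters \<theta> (take j (w @ [c]))) * ?B (drop j (w @ [c])))
        = (\<Sum>j\<in>inner_cuts w. pc (bcum_letters \<theta> (take j w))
             * (if last w = c then ?B (drop j w) else center \<theta> (?B (drop j w))) * mono [c])"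
      by (intro sum.cong) (auto simp: inner_cuts_def centered_chain_blocks_snoc mult.assoc)
    show ?thesis
    proof (cases "last w = c")
      case True
      have "length w \<notin> inner_cuts w" "take (length w) (w @ [c]) = w" "drop (length w) (w @ [c]) = [c]"
        by (simp_all add: inner_cuts_def)
      moreover have "?L w * mono [c] = ?L (w @ [c]) + pc (bcum_letters \<theta> w) * mono [c]"
        using False
        by (simp add: centered_chain_snoc center_def left_diff_distrib bcum_letters_def bcum_centered_chain)
      ultimately show ?thesis
        using False True
        by (simp add: centered_chain_blocks_snoc IH inner_cuts_snoc old_cuts distrib_right sum_distrib_right
            del: take_append drop_append)
    next
      case False': False
      then show ?thesis
        using False
        by (simp add: centered_chain_blocks_snoc IH inner_cuts_snoc old_cuts centered_chain_snoc
            center_add center_sum center_pc_mult distrib_right sum_distrib_right del: take_append drop_append)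
    qed
  qed
qed simp

lemma bcum_blocks_expansion:
  assumes "w \<noteq> []"
  shows "bcum \<theta> (blocks w) = bcum_letters \<theta> w
           + (\<Sum>j\<in>inner_cuts w. bcum_letters \<theta> (take j w) * bcum \<theta> (blocks (drop j w)))"
proof -
  have "drop j w \<noteq> []" if "j \<in> inner_cuts w" for j
    using that by (auto simp: inner_cuts_def)
  then show ?thesis
    using assms
    by (simp add: bcum_centered_chain centered_chain_blocks_expansion[OF assms] lin_add lin_sum
        lin_scale bcum_letters_def)
qed

section \<open>Vanishing of cumulants of letters under c-freeness\<close>

lemma in_alg_diff: "in_alg a p \<Longrightarrow> in_alg a q \<Longrightarrow> in_alg a (p - q)"
  unfolding in_alg_def using keys_diff[of p q] by blast

lemma in_alg_mult: "in_alg a p \<Longrightarrow> in_alg a q \<Longrightarrow> in_alg a (p * q)"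
  unfolding in_alg_def using keys_mult[of p q] by (fastforce simp: plus_nword_def)

lemma in_alg_pc: "in_alg a (pc c)"
  by (simp add: in_alg_def pc_def zero_nword_def)

lemma in_alg_mono: "set w \<subseteq> {a} \<Longrightarrow> in_alg a (mono w)"
  by (simp add: in_alg_def mono_def)

lemma cfreeD:
  assumes "cfree \<phi> \<psi>" "us \<noteq> []" "list_all2 in_alg ls us" "successively (\<noteq>) ls"
    "\<forall>u\<in>set us. lin \<psi> u = 0"
  shows "lin \<psi> (prod_list us) = 0" "lin \<phi> (prod_list us) = (\<Prod>u\<leftarrow>us. lin \<phi> u)"
  using assms unfolding cfree_def list_all2_conv_all_nth successively_conv_nth
  by (metis nth_mem)+

text \<open>The list \<open>ls\<close> records the letter whose subalgebra contains each factor in \<open>us\<close>. Modulo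
  constants, the nested centerings of a word of letters stay in the span of these products
  (\<open>alt_span_mult_letter\<close>), and c-freeness makes \<open>\<theta>\<close> vanish on that span.\<close>
definition alt_centered ::
    "(letter list \<Rightarrow> complex) \<Rightarrow> (letter list \<Rightarrow> complex) \<Rightarrow> letter \<Rightarrow> letter list \<Rightarrow> ncpoly list \<Rightarrow> bool"
  where "alt_centered \<psi> \<theta> e ls us \<longleftrightarrow> us \<noteq> [] \<and> list_all2 in_alg ls us \<and> successively (\<noteq>) ls
           \<and> hd ls = e \<and> lin \<theta> (hd us) = 0 \<and> (\<forall>u\<in>set (tl us). lin \<psi> u = 0)"

lemma alt_centered_single: "alt_centered \<psi> \<theta> e [l] [u] \<longleftrightarrow> l = e \<and> in_alg l u \<and> lin \<theta> u = 0"
  by (auto simp: alt_centered_def)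

lemma alt_centered_snoc_iff:
  assumes "us \<noteq> []" "length ls = length us"
  shows "alt_centered \<psi> \<theta> e (ls @ [l]) (us @ [u])
     \<longleftrightarrow> alt_centered \<psi> \<theta> e ls us \<and> last ls \<noteq> l \<and> in_alg l u \<and> lin \<psi> u = 0"
proof -
  have "ls \<noteq> []"
    using assms by auto
  then show ?thesis
    using assms by (auto simp: alt_centered_def list_all2_append successively_append_iff tl_append2)
qed

inductive_set alt_span :: "(letter list \<Rightarrow> complex) \<Rightarrow> (letter list \<Rightarrow> complex) \<Rightarrow> letter \<Rightarrow> ncpoly set"
  for \<psi> \<theta> e where
  zero: "0 \<in> alt_span \<psi> \<theta> e"
| add: "p \<in> alt_span \<psi> \<theta> e \<Longrightarrow> q \<in> alt_span \<psi> \<theta> e \<Longrightarrow> p + q \<in> alt_span \<psi> \<theta> e"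
| scale: "p \<in> alt_span \<psi> \<theta> e \<Longrightarrow> pc a * p \<in> alt_span \<psi> \<theta> e"
| prod: "alt_centered \<psi> \<theta> e ls us \<Longrightarrow> prod_list us \<in> alt_span \<psi> \<theta> e"

lemma lin_center: "\<theta> [] = 1 \<Longrightarrow> lin \<theta> (center \<theta> p) = 0"
  by (simp add: center_def lin_diff lin_pc)

lemma in_alg_center: "in_alg a p \<Longrightarrow> in_alg a (center \<theta> p)"
  by (simp add: center_def in_alg_diff in_alg_pc)

lemma alt_centered_mult_letter:
  assumes "\<psi> [] = 1" "\<theta> [] = 1" "alt_centered \<psi> \<theta> e ls us"
  shows "\<exists>a. prod_list us * mono [c] - pc a \<in> alt_span \<psi> \<theta> e \<and> (c \<noteq> e \<longrightarrow> a = 0)"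
proof -
  have len: "length ls = length us" and "us \<noteq> []"
    using assms(3) by (auto simp: alt_centered_def list_all2_lengthD)
  then obtain us' u ls' l where us: "us = us' @ [u]" and ls: "ls = ls' @ [l]"
    by (metis length_0_conv rev_exhaust)
  have len': "length ls' = length us'"
    using len by (simp add: us ls)
  consider (new_factor) "l \<noteq> c" | (merge) "l = c" "us' \<noteq> []" | (single) "l = c" "us' = []"
    by blast
  then show ?thesis
  proof cases
    case new_factor
    let ?R = "center \<psi> (mono [c])"
    have "alt_centered \<psi> \<theta> e (ls @ [c]) (us @ [?R])"
      using assms new_factor unfolding alt_centered_snoc_iff[OF \<open>us \<noteq> []\<close> len]
      by (simp add: ls in_alg_center in_alg_mono lin_center)
    moreover have "prod_list us * mono [c] = prod_list (us @ [?R]) + pc (lin \<psi> (mono [c])) * prod_list us"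
      by (simp add: center_def right_diff_distrib pc_central)
    ultimately show ?thesis
      using assms(3) by (metis alt_span.add alt_span.prod alt_span.scale diff_zero pc_0)
  next
    case merge
    let ?R = "center \<psi> (u * mono [c])"
    have "alt_centered \<psi> \<theta> e ls' us'" "last ls' \<noteq> l" "in_alg l u"
      using assms(3) merge len' by (simp_all add: us ls alt_centered_snoc_iff)
    then have "alt_centered \<psi> \<theta> e (ls' @ [l]) (us' @ [?R])"
      using merge len' assms(1)
      by (simp add: alt_centered_snoc_iff in_alg_center in_alg_mult in_alg_mono lin_center)
    moreover have "prod_list us * mono [c] = prod_list (us' @ [?R]) + pc (lin \<psi> (u * mono [c])) * prod_list us'"
      by (simp add: us center_def mult.assoc right_diff_distrib pc_central)
    ultimately show ?thesis
      using \<open>alt_centered \<psi> \<theta> e ls' us'\<close> ls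
      by (metis alt_span.add alt_span.prod alt_span.scale diff_zero pc_0)
  next
    case single
    let ?R = "center \<theta> (u * mono [c])"
    have "c = e" "in_alg c u"
      using assms(3) single len' by (auto simp: us ls alt_centered_single)
    then have "alt_centered \<psi> \<theta> e [c] [?R]"
      using assms(2) by (simp add: alt_centered_single in_alg_center in_alg_mult in_alg_mono lin_center)
    moreover have "prod_list us * mono [c] - pc (lin \<theta> (u * mono [c])) = prod_list [?R]"
      by (simp add: us single center_def)
    ultimately show ?thesis
      using \<open>c = e\<close> by (metis alt_span.prod)
  qed
qed

lemma alt_span_mult_letter:
  assumes "\<psi> [] = 1" "\<theta> [] = 1" "p \<in> alt_span \<psi> \<theta> e"
  shows "\<exists>a. p * mono [c] - pc a \<in> alt_span \<psi> \<theta> e \<and> (c \<noteq> e \<longrightarrow> a = 0)"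
  using assms(3)
proof (induction rule: alt_span.induct)
  case zero
  show ?case
    by (intro exI[of _ 0]) (simp add: alt_span.zero)
next
  case (add p q)
  then obtain a1 a2 where "p * mono [c] - pc a1 \<in> alt_span \<psi> \<theta> e" "c \<noteq> e \<longrightarrow> a1 = 0"
    "q * mono [c] - pc a2 \<in> alt_span \<psi> \<theta> e" "c \<noteq> e \<longrightarrow> a2 = 0"
    by blast
  moreover have "(p + q) * mono [c] - pc (a1 + a2) = (p * mono [c] - pc a1) + (q * mono [c] - pc a2)"
    by (simp add: distrib_right pc_add)
  ultimately show ?case
    by (intro exI[of _ "a1 + a2"]) (simp add: alt_span.add)
next
  case (scale p b)
  then obtain a where "p * mono [c] - pc a \<in> alt_span \<psi> \<theta> e" "c \<noteq> e \<longrightarrow> a = 0"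
    by blast
  moreover have "pc b * p * mono [c] - pc (b * a) = pc b * (p * mono [c] - pc a)"
    by (simp add: mult.assoc right_diff_distrib pc_mult)
  ultimately show ?case
    by (intro exI[of _ "b * a"]) (simp add: alt_span.scale)
next
  case (prod ls us)
  then show ?case
    by (rule alt_centered_mult_letter[of \<psi> \<theta>, OF assms(1,2)])
qed

lemma lin_psi_alt_span:
  assumes "cfree \<phi> \<psi>" "p \<in> alt_span \<psi> \<psi> e"
  shows "lin \<psi> p = 0"
  using assms(2)
proof (induction rule: alt_span.induct)
  case (prod ls us)
  then have "\<forall>u\<in>set us. lin \<psi> u = 0"
    by (cases us) (auto simp: alt_centered_def)
  with prod show ?case
    using cfreeD(1)[OF assms(1)] by (auto simp: alt_centered_def)
qed (simp_all add: lin_add lin_scale)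

lemma lin_phi_alt_span:
  assumes "cfree \<phi> \<psi>" "\<phi> [] = 1" "\<psi> [] = 1" "p \<in> alt_span \<psi> \<phi> e"
  shows "lin \<phi> p = 0"
  using assms(4)
proof (induction rule: alt_span.induct)
  case (prod ls us)
  then obtain u rest l lrest where us: "us = u # rest" and ls: "ls = l # lrest"
    by (auto simp: alt_centered_def list_all2_Cons2 neq_Nil_conv)
  from prod have u: "in_alg l u" "lin \<phi> u = 0"
    and rest: "list_all2 in_alg lrest rest" "\<forall>v\<in>set rest. lin \<psi> v = 0"
    and alt: "successively (\<noteq>) (l # lrest)"
    by (auto simp: alt_centered_def us ls)
  show ?case
  proof (cases "rest = []")
    case True
    then show ?thesis
      using u by (simp add: us)
  next
    case False
    let ?u' = "center \<psi> u"
    have "lin \<phi> (prod_list (?u' # rest)) = lin \<phi> ?u' * (\<Prod>v\<leftarrow>rest. lin \<phi> v)"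
      using cfreeD(2)[OF assms(1), of "?u' # rest" "l # lrest"] u rest alt assms(3)
      by (simp add: in_alg_center lin_center)
    moreover have "lin \<phi> (prod_list rest) = (\<Prod>v\<leftarrow>rest. lin \<phi> v)"
      using cfreeD(2)[OF assms(1) False rest(1) _ rest(2)] alt by (auto simp: successively_Cons)
    moreover have "prod_list us = prod_list (?u' # rest) + pc (lin \<psi> u) * prod_list rest"
      by (simp add: us center_def left_diff_distrib)
    moreover have "lin \<phi> ?u' = - lin \<psi> u"
      using u assms(2) by (simp add: center_def lin_diff lin_pc)
    ultimately show ?thesis
      by (simp add: lin_add lin_scale)
  qed
qed (simp_all add: lin_add lin_scale)

lemma centered_chain_letters_mod_alt_span:
  assumes "\<psi> [] = 1" "\<theta> [] = 1" "\<And>e p. p \<in> alt_span \<psi> \<theta> e \<Longrightarrow> lin \<theta> p = 0" "w \<noteq> []"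
  shows "\<exists>a. centered_chain \<theta> (map (\<lambda>x. [x]) w) - pc a \<in> alt_span \<psi> \<theta> (hd w)
           \<and> (hd w \<noteq> last w \<longrightarrow> a = 0)"
  using assms(4)
proof (induction w rule: rev_induct)
  case (snoc c w)
  show ?case
  proof (cases "w = []")
    case True
    have "alt_centered \<psi> \<theta> c [c] [center \<theta> (mono [c])]"
      using assms(2) by (simp add: alt_centered_single in_alg_center in_alg_mono lin_center)
    then show ?thesis
      using True by (intro exI[of _ "lin \<theta> (mono [c])"]) (auto simp: center_def dest: alt_span.prod)
  next
    case False
    then obtain a where a: "centered_chain \<theta> (map (\<lambda>x. [x]) w) - pc a \<in> alt_span \<psi> \<theta> (hd w)"
      using snoc.IH by blast
    then have "center \<theta> (centered_chain \<theta> (map (\<lambda>x. [x]) w)) = centered_chain \<theta> (map (\<lambda>x. [x]) w) - pc a"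
      using assms(3)[OF a] assms(2) by (simp add: center_def lin_diff lin_pc)
    then show ?thesis
      using False alt_span_mult_letter[OF assms(1,2) a, of c] by (simp add: centered_chain_snoc) blast
  qed
qed simp

lemma bcum_letters_eq_0:
  assumes "\<psi> [] = 1" "\<theta> [] = 1" "\<And>e p. p \<in> alt_span \<psi> \<theta> e \<Longrightarrow> lin \<theta> p = 0"
    and "w \<noteq> []" "hd w \<noteq> last w"
  shows "bcum_letters \<theta> w = 0"
proof -
  have "centered_chain \<theta> (map (\<lambda>x. [x]) w) \<in> alt_span \<psi> \<theta> (hd w)"
    using centered_chain_letters_mod_alt_span[of \<psi> \<theta> w] assms by auto
  then show ?thesis
    using assms(3,4) by (simp add: bcum_letters_def bcum_centered_chain)
qed

section \<open>Block cumulants in terms of cumulants of letters\<close>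

lemma last_take_nth: "0 < j \<Longrightarrow> j \<le> length w \<Longrightarrow> last (take j w) = w ! (j - 1)"
  by (subst last_conv_nth) (auto simp: min_def)

definition cuts_leaving :: "letter \<Rightarrow> letter list \<Rightarrow> nat set" where
  "cuts_leaving a w = {k\<in>{1..length w}. k = length w \<or> w ! k \<noteq> a}"

lemma finite_cuts_leaving [simp]: "finite (cuts_leaving a w)"
  by (simp add: cuts_leaving_def)

lemma sum_cuts_leaving_drop:
  assumes "k < length w"
  shows "(\<Sum>j\<in>cuts_leaving a (drop k w). g (take j (drop k w)) (drop j (drop k w)))
       = (\<Sum>m\<in>{m\<in>cuts_leaving a w. k < m}. g (drop k (take m w)) (drop m w))"
  by (rule sum.reindex_bij_witness[where i = "\<lambda>m. m - k" and j = "\<lambda>j. j + k"])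
     (use assms in \<open>auto simp: cuts_leaving_def take_drop add.commute\<close>)

locale hd_last_cumulants =
  fixes \<theta> :: "letter list \<Rightarrow> complex"
  assumes bcum_letters_hd_last: "w \<noteq> [] \<Longrightarrow> hd w \<noteq> last w \<Longrightarrow> bcum_letters \<theta> w = 0"
begin

lemma bcum_blocks_hd_last: "w \<noteq> [] \<Longrightarrow> hd w \<noteq> last w \<Longrightarrow> bcum \<theta> (blocks w) = 0"
proof (induction "length w" arbitrary: w rule: less_induct)
  case less
  have "bcum_letters \<theta> (take j w) * bcum \<theta> (blocks (drop j w)) = 0" if "j \<in> inner_cuts w" for j
  proof -
    have j: "0 < j" "j < length w" "w ! (j - 1) = w ! j"
      using that by (auto simp: inner_cuts_def)
    show ?thesis
    proof (cases "hd w = w ! (j - 1)")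
      case True
      with j less.prems have "hd (drop j w) \<noteq> last (drop j w)"
        by (simp add: hd_drop_conv_nth)
      with j show ?thesis
        using less.hyps[of "drop j w"] by simp
    next
      case False
      with j less.prems(1) have "bcum_letters \<theta> (take j w) = 0"
        using bcum_letters_hd_last[of "take j w"] by (auto simp: last_take_nth)
      then show ?thesis
        by simp
    qed
  qed
  then have "(\<Sum>j\<in>inner_cuts w. bcum_letters \<theta> (take j w) * bcum \<theta> (blocks (drop j w))) = 0"
    by (intro sum.neutral) blast
  then show ?case
    using bcum_blocks_expansion[OF less.prems(1), of \<theta>] bcum_letters_hd_last[OF less.prems] by simp
qed

lemma bblock_eq_bcum_blocks: "w \<noteq> [] \<Longrightarrow> hd w = a \<Longrightarrow> bblock \<theta> a w = bcum \<theta> (blocks w)"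
  unfolding bblock_def using bcum_blocks_hd_last[of w] by auto

lemma bdelta_eq_bcum_letters: "w \<noteq> [] \<Longrightarrow> hd w = a \<Longrightarrow> bdelta \<theta> a w = bcum_letters \<theta> w"
  unfolding bdelta_def using bcum_letters_hd_last[of w] by (auto simp: bcum_letters_def)

lemma bblock_recursion:
  assumes "w \<noteq> []" "hd w = a"
  shows "bblock \<theta> a w = bdelta \<theta> a w
           + (\<Sum>k\<in>{k\<in>{1..<length w}. w ! k = a}. bdelta \<theta> a (take k w) * bblock \<theta> a (drop k w))"
proof -
  let ?t = "\<lambda>j. bcum_letters \<theta> (take j w) * bcum \<theta> (blocks (drop j w))"
  have vanish: "bcum_letters \<theta> (take j w) = 0" if "0 < j" "j < length w" "w ! (j - 1) \<noteq> a" for j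
    using that assms bcum_letters_hd_last[of "take j w"] by (simp add: last_take_nth)
  have "(\<Sum>j\<in>inner_cuts w. ?t j) = (\<Sum>k\<in>{k\<in>{1..<length w}. w ! k = a}. ?t k)"
    by (rule sum.mono_neutral_cong) (auto simp: inner_cuts_def intro: vanish)
  also have "\<dots> = (\<Sum>k\<in>{k\<in>{1..<length w}. w ! k = a}. bdelta \<theta> a (take k w) * bblock \<theta> a (drop k w))"
    using assms
    by (intro sum.cong) (auto simp: bdelta_eq_bcum_letters bblock_eq_bcum_blocks hd_drop_conv_nth)
  finally show ?thesis
    using assms by (simp add: bblock_eq_bcum_blocks bdelta_eq_bcum_letters bcum_blocks_expansion)
qed

lemma bdelta_expansion_from_bblock:
  assumes rec: "\<And>v. v \<noteq> [] \<Longrightarrow> hd v = a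
                  \<Longrightarrow> f v = (\<Sum>k\<in>cuts_leaving a v. pc (bblock \<theta> a (take k v)) * f (drop k v))"
    and "w \<noteq> []" "hd w = a"
  shows "f w = (\<Sum>k\<in>{1..length w}. pc (bdelta \<theta> a (take k w)) * f (drop k w))"
proof -
  let ?C = "cuts_leaving a w" and ?K = "{k\<in>{1..<length w}. w ! k = a}"
  let ?F = "\<lambda>k. pc (bdelta \<theta> a (take k w)) * f (drop k w)"
  let ?G = "\<lambda>k m. pc (bdelta \<theta> a (take k w)) * pc (bblock \<theta> a (drop k (take m w))) * f (drop m w)"
  have "{1..length w} = ?C \<union> ?K" "?C \<inter> ?K = {}"
    by (auto simp: cuts_leaving_def)
  then have "(\<Sum>k\<in>{1..length w}. ?F k) = sum ?F ?C + sum ?F ?K"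
    by (simp add: sum.union_disjoint)
  also have "sum ?F ?K = (\<Sum>k\<in>?K. \<Sum>m\<in>{m\<in>?C. k < m}. ?G k m)"
  proof (rule sum.cong[OF refl])
    fix k assume "k \<in> ?K"
    then have "drop k w \<noteq> []" "hd (drop k w) = a" "k < length w"
      by (auto simp: hd_drop_conv_nth)
    then show "?F k = (\<Sum>m\<in>{m\<in>?C. k < m}. ?G k m)"
      using rec[of "drop k w"] sum_cuts_leaving_drop[where a = a and g = "\<lambda>u v. pc (bblock \<theta> a u) * f v"]
      by (simp add: sum_distrib_left mult.assoc)
  qed
  also have "\<dots> = (\<Sum>m\<in>?C. \<Sum>k\<in>{k\<in>?K. k < m}. ?G k m)"
    by (rule sum.swap_restrict) auto
  finally have "(\<Sum>k\<in>{1..length w}. ?F k) = (\<Sum>m\<in>?C. ?F m + (\<Sum>k\<in>{k\<in>?K. k < m}. ?G k m))"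
    by (simp add: sum.distrib)
  also have "\<dots> = (\<Sum>m\<in>?C. pc (bblock \<theta> a (take m w)) * f (drop m w))"
  proof (rule sum.cong[OF refl])
    fix m assume "m \<in> ?C"
    then have m: "0 < m" "m \<le> length w"
      by (auto simp: cuts_leaving_def)
    have "{k\<in>{1..<length (take m w)}. take m w ! k = a} = {k\<in>?K. k < m}"
      using m by auto
    then have "bblock \<theta> a (take m w) = bdelta \<theta> a (take m w)
        + (\<Sum>k\<in>{k\<in>?K. k < m}. bdelta \<theta> a (take k w) * bblock \<theta> a (drop k (take m w)))"
      using bblock_recursion[of "take m w" a] m assms(2,3) by (simp add: min_def)
    then show "?F m + (\<Sum>k\<in>{k\<in>?K. k < m}. ?G k m) = pc (bblock \<theta> a (take m w)) * f (drop m w)"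
      by (simp add: pc_add pc_sum pc_mult distrib_right sum_distrib_right)
  qed
  also have "\<dots> = f w"
    using rec assms(2,3) by simp
  finally show ?thesis ..
qed

end

lemma hd_last_cumulants_phi:
  assumes "cfree \<phi> \<psi>" "\<phi> [] = 1" "\<psi> [] = 1"
  shows "hd_last_cumulants \<phi>"
  by unfold_locales (rule bcum_letters_eq_0[of \<psi>], use assms in \<open>auto intro: lin_phi_alt_span\<close>)

lemma hd_last_cumulants_psi:
  assumes "cfree \<phi> \<psi>" "\<psi> [] = 1"
  shows "hd_last_cumulants \<psi>"
  by unfold_locales (rule bcum_letters_eq_0[of \<psi>], use assms in \<open>auto intro: lin_psi_alt_span\<close>)

section \<open>Recursions for the conditional expectations\<close>

declare Ephi.simps [simp del] parse_pairs.simps [simp del] Ggrp.simps [simp del]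

lemma letter_neq_iff: "x \<noteq> LX \<longleftrightarrow> x = LY" "x \<noteq> LY \<longleftrightarrow> x = LX"
  by (cases x; simp)+

lemma Ephi_Nil [simp]: "Ephi \<phi> \<psi> [] = 1"
  by (simp add: Ephi.simps)

lemma parse_pairs_Nil [simp]: "parse_pairs [] = []"
  by (simp add: parse_pairs.simps)

lemma Ggrp_Nil [simp]: "Ggrp \<psi> [] = 1"
  by (simp add: Ggrp.simps)

lemma Epsi_pure_LX:
  assumes "set w \<subseteq> {LX}"
  shows "Epsi \<psi> w = mono w"
proof -
  have "takeWhile (\<lambda>c. c = LX) w = w" "dropWhile (\<lambda>c. c = LX) w = []"
    using assms by (auto simp: takeWhile_eq_all_conv dropWhile_eq_Nil_conv)
  then show ?thesis
    by (simp only: Epsi_def parse_pairs_Nil Ggrp_Nil mult_1_right)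
qed

lemma Epsi_Nil [simp]: "Epsi \<psi> [] = 1"
  by (simp add: Epsi_pure_LX)

lemma Epsi_Cons_LX: "Epsi \<psi> (LX # w) = mono [LX] * Epsi \<psi> w"
  by (simp add: Epsi_def mono_mult flip: mult.assoc)

lemma cuts_leaving_pure: "w \<noteq> [] \<Longrightarrow> set w \<subseteq> {a} \<Longrightarrow> cuts_leaving a w = {length w}"
  by (auto simp: cuts_leaving_def subset_iff Suc_le_eq) (meson le_neq_implies_less nth_mem)

lemma cuts_leaving_eq: "w \<noteq> [] \<Longrightarrow> cuts_leaving a w = insert (length w) {k\<in>{1..<length w}. w ! k \<noteq> a}"
  by (auto simp: cuts_leaving_def Suc_le_eq)

lemma bblock_pure:
  assumes "w \<noteq> []" "set w \<subseteq> {a}"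
  shows "bblock \<theta> a w = \<theta> w"
proof -
  have "hd w = a" "last w = a"
    using assms hd_in_set last_in_set by blast+
  with assms show ?thesis
    by (simp add: bblock_def blocks_pure bcum.simps[of \<theta> "[w]"])
qed

lemma Ephi_LY_recursion:
  assumes "w \<noteq> []" "hd w = LY"
  shows "Ephi \<phi> \<psi> w = (\<Sum>k\<in>cuts_leaving LY w. pc (bblock \<phi> LY (take k w)) * Ephi \<phi> \<psi> (drop k w))"
proof -
  have not_X: "\<not> set w \<subseteq> {LX}"
    using assms by (cases w) auto
  show ?thesis
  proof (cases "set w \<subseteq> {LY}")
    case True
    then have "Ephi \<phi> \<psi> w = pc (\<phi> w)"
      using not_X by (simp add: Ephi.simps[of \<phi> \<psi> w])
    with True assms(1) show ?thesis
      by (simp add: cuts_leaving_pure bblock_pure)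
  next
    case False
    then have "Ephi \<phi> \<psi> w = pc (bblock \<phi> LY w)
        + (\<Sum>k\<in>{k\<in>{1..<length w}. w ! k = LX}. pc (bblock \<phi> LY (take k w)) * Ephi \<phi> \<psi> (drop k w))"
      using not_X assms(2) by (subst Ephi.simps) simp
    with assms(1) show ?thesis
      by (simp add: cuts_leaving_eq letter_neq_iff)
  qed
qed

lemma Ephi_minus_Epsi_LX_recursion:
  assumes "w \<noteq> []" "hd w = LX"
  shows "Ephi \<phi> \<psi> w - Epsi \<psi> w
       = (\<Sum>k\<in>cuts_leaving LX w. pc (bblock \<phi> LX (take k w)) * (Ephi \<phi> \<psi> (drop k w) - Epsi \<psi> (drop k w)))"
proof -
  have not_Y: "\<not> set w \<subseteq> {LY}"
    using assms by (cases w) auto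
  show ?thesis
  proof (cases "set w \<subseteq> {LX}")
    case True
    then have "Ephi \<phi> \<psi> w = mono w"
      by (simp add: Ephi.simps[of \<phi> \<psi> w])
    with True assms(1) show ?thesis
      by (simp add: cuts_leaving_pure Epsi_pure_LX)
  next
    case False
    then have "Ephi \<phi> \<psi> w = Epsi \<psi> w
        + (\<Sum>k\<in>{k\<in>{1..<length w}. w ! k = LY}.
             pc (bblock \<phi> LX (take k w)) * (Ephi \<phi> \<psi> (drop k w) - Epsi \<psi> (drop k w)))"
      using not_Y assms(2) by (subst Ephi.simps) simp
    with assms(1) show ?thesis
      by (simp add: cuts_leaving_eq letter_neq_iff)
  qed
qed

lemma parse_pairs_ConsE:
  assumes "w \<noteq> []" "hd w = LY"
  obtains y x r where "w = y @ x @ r" "y \<noteq> []" "set y \<subseteq> {LY}" "set x \<subseteq> {LX}"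
    "r = [] \<or> hd r = LY" "r \<noteq> [] \<Longrightarrow> x \<noteq> []" "parse_pairs w = (y, x) # parse_pairs r"
proof
  define y r0 where "y = takeWhile (\<lambda>c. c = LY) w" and "r0 = dropWhile (\<lambda>c. c = LY) w"
  define x r where "x = takeWhile (\<lambda>c. c = LX) r0" and "r = dropWhile (\<lambda>c. c = LX) r0"
  have hd_r0: "hd r0 = LX" if "r0 \<noteq> []"
    using hd_dropWhile[of "\<lambda>c. c = LY" w] that letter_neq_iff(2) unfolding r0_def by metis
  have hd_r: "hd r = LY" if "r \<noteq> []"
    using hd_dropWhile[of "\<lambda>c. c = LX" r0] that letter_neq_iff(1) unfolding r_def by metis
  show "w = y @ x @ r"
    by (simp add: y_def r0_def x_def r_def)
  show "y \<noteq> []"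
    using assms by (cases w) (auto simp: y_def)
  show "set y \<subseteq> {LY}" "set x \<subseteq> {LX}"
    by (auto simp: y_def x_def dest: set_takeWhileD)
  show "r = [] \<or> hd r = LY"
    using hd_r by blast
  show "x \<noteq> []" if "r \<noteq> []"
  proof -
    have "r0 \<noteq> []"
      using that by (auto simp: r_def)
    with hd_r0 show ?thesis
      by (cases r0) (auto simp: x_def)
  qed
  show "parse_pairs w = (y, x) # parse_pairs r"
    using assms by (subst parse_pairs.simps) (simp add: Let_def y_def r0_def x_def r_def)
qed

lemma Epsi_LX_block_append:
  assumes "set x \<subseteq> {LX}" "r = [] \<or> hd r = LY"
  shows "Epsi \<psi> (x @ r) = mono x * Ggrp \<psi> (parse_pairs r)"
proof -
  have "takeWhile (\<lambda>c. c = LX) (x @ r) = x" "dropWhile (\<lambda>c. c = LX) (x @ r) = r"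
    using assms by (cases r; auto simp: takeWhile_append2 dropWhile_append2 subset_iff)+
  then show ?thesis
    by (simp only: Epsi_def)
qed

definition group_sum ::
    "(letter list \<Rightarrow> complex) \<Rightarrow> (letter list list \<Rightarrow> complex) \<Rightarrow> (letter list \<times> letter list) list \<Rightarrow> ncpoly"
  where "group_sum \<psi> g ps = (\<Sum>k\<in>{1..length ps}.
           pc (g (gtok (take k ps))) * mono (snd (last (take k ps))) * Ggrp \<psi> (drop k ps))"

lemma Ggrp_eq_group_sum: "ps \<noteq> [] \<Longrightarrow> Ggrp \<psi> ps = group_sum \<psi> (bcum \<psi>) ps"
  by (subst Ggrp.simps) (simp add: group_sum_def)

lemma gtok_Cons: "gtok ((y, x) # ps) = (if ps = [] then [y] else y # x # gtok ps)"
  by (cases ps) (auto simp: gtok_def)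

lemma group_sum_Cons:
  "group_sum \<psi> g ((y, x) # ps) = pc (g [y]) * mono x * Ggrp \<psi> ps + group_sum \<psi> (\<lambda>ts. g (y # x # ts)) ps"
proof -
  let ?F = "\<lambda>k. pc (g (gtok (take k ((y, x) # ps)))) * mono (snd (last (take k ((y, x) # ps))))
                  * Ggrp \<psi> (drop k ((y, x) # ps))"
  have "group_sum \<psi> g ((y, x) # ps) = ?F 1 + (\<Sum>k\<in>{1..length ps}. ?F (Suc k))"
    unfolding group_sum_def by (simp only: length_Cons sum.atLeast_Suc_atMost[of 1] sum.shift_bounds_cl_Suc_ivl)
  also have "(\<Sum>k\<in>{1..length ps}. ?F (Suc k)) = group_sum \<psi> (\<lambda>ts. g (y # x # ts)) ps"
    unfolding group_sum_def by (intro sum.cong) (auto simp: gtok_Cons)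
  finally show ?thesis
    by (simp add: gtok_Cons)
qed

definition LY_block_ends :: "letter list \<Rightarrow> nat set" where
  "LY_block_ends w = {k\<in>{1..length w}. w ! (k - 1) = LY \<and> (k = length w \<or> w ! k = LX)}"

lemma finite_LY_block_ends [simp]: "finite (LY_block_ends w)"
  by (simp add: LY_block_ends_def)

lemma LY_block_ends_Nil [simp]: "LY_block_ends [] = {}"
  by (simp add: LY_block_ends_def)

lemma LY_block_ends_append:
  assumes "u \<noteq> []" "v = [] \<or> hd v \<noteq> last u"
  shows "LY_block_ends (u @ v) = LY_block_ends u \<union> (\<lambda>k. k + length u) ` LY_block_ends v"
proof (intro set_eqI iffI)
  fix k assume "k \<in> LY_block_ends (u @ v)"
  then show "k \<in> LY_block_ends u \<union> (\<lambda>k. k + length u) ` LY_block_ends v"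
    using assms
    by (cases "k \<le> length u")
       (auto simp: LY_block_ends_def nth_append last_conv_nth hd_conv_nth letter_neq_iff image_iff
        Suc_le_eq intro!: exI[of _ "k - length u"] split: if_splits)
next
  fix k assume "k \<in> LY_block_ends u \<union> (\<lambda>k. k + length u) ` LY_block_ends v"
  then show "k \<in> LY_block_ends (u @ v)"
    using assms
    by (cases v) (auto simp: LY_block_ends_def nth_append last_conv_nth letter_neq_iff)
qed

lemma LY_block_ends_pure_LY: "y \<noteq> [] \<Longrightarrow> set y \<subseteq> {LY} \<Longrightarrow> LY_block_ends y = {length y}"
  by (auto simp: LY_block_ends_def subset_iff Suc_le_eq last_conv_nth[symmetric])
     (metis le_neq_implies_less nth_mem letter.distinct(1))

lemma LY_block_ends_pure_LX:
  assumes "set x \<subseteq> {LX}"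
  shows "LY_block_ends x = {}"
proof -
  have "x ! (k - 1) = LX" if "1 \<le> k" "k \<le> length x" for k
  proof -
    have "x ! (k - 1) \<in> set x"
      using that by (intro nth_mem) simp
    with assms show ?thesis
      by blast
  qed
  then show ?thesis
    by (auto simp: LY_block_ends_def)
qed

lemma LY_block_ends_decomp:
  assumes "y \<noteq> []" "set y \<subseteq> {LY}" "set x \<subseteq> {LX}" "r = [] \<or> hd r = LY" "r \<noteq> [] \<Longrightarrow> x \<noteq> []"
  shows "LY_block_ends (y @ x @ r) = insert (length y) ((\<lambda>k. k + (length y + length x)) ` LY_block_ends r)"
proof (cases "x = []")
  case True
  with assms have "r = []"
    by blast
  with True assms show ?thesis
    by (simp add: LY_block_ends_pure_LY)
next
  case False
  have "last y = LY" "hd x = LX" "last x = LX"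
    using assms(1-3) False hd_in_set last_in_set by blast+
  then have "LY_block_ends (x @ r) = (\<lambda>k. k + length x) ` LY_block_ends r"
    using assms(3,4) False by (auto simp: LY_block_ends_append LY_block_ends_pure_LX)
  moreover have "LY_block_ends (y @ x @ r) = {length y} \<union> (\<lambda>k. k + length y) ` LY_block_ends (x @ r)"
    using assms(1,2) False \<open>last y = LY\<close> \<open>hd x = LX\<close>
    by (simp add: LY_block_ends_append LY_block_ends_pure_LY)
  ultimately show ?thesis
    by (simp add: image_image add_ac)
qed

lemma sum_LY_block_ends_decomp:
  assumes "y \<noteq> []" "set y \<subseteq> {LY}" "set x \<subseteq> {LX}" "r = [] \<or> hd r = LY" "r \<noteq> [] \<Longrightarrow> x \<noteq> []"
  shows "(\<Sum>k\<in>LY_block_ends (y @ x @ r). pc (g (blocks (take k (y @ x @ r)))) * Epsi \<psi> (drop k (y @ x @ r)))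
       = pc (g [y]) * Epsi \<psi> (x @ r)
         + (\<Sum>k\<in>LY_block_ends r. pc (g (y # x # blocks (take k r))) * Epsi \<psi> (drop k r))"
proof -
  have "blocks (y @ x @ take k r) = y # x # blocks (take k r)" if "k \<in> LY_block_ends r" for k
  proof -
    have "take k r \<noteq> []" "r \<noteq> []"
      using that by (auto simp: LY_block_ends_def)
    then have "x \<noteq> []" "hd (take k r) = LY"
      using assms(4,5) that by (auto simp: LY_block_ends_def)
    moreover have "last y = LY" "hd x = LX" "last x = LX"
      using assms(1-3) \<open>x \<noteq> []\<close> hd_in_set last_in_set by blast+
    ultimately show ?thesis
      using assms(1-3) \<open>take k r \<noteq> []\<close>
      by (simp add: blocks_append blocks_pure)
  qed
  moreover have "length y \<notin> (\<lambda>k. k + (length y + length x)) ` LY_block_ends r"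
    by (auto simp: LY_block_ends_def)
  ultimately show ?thesis
    using assms by (simp add: LY_block_ends_decomp sum.reindex blocks_pure)
qed

lemma group_sum_parse_pairs:
  "w = [] \<or> hd w = LY \<Longrightarrow> group_sum \<psi> g (parse_pairs w)
     = (\<Sum>k\<in>LY_block_ends w. pc (g (blocks (take k w))) * Epsi \<psi> (drop k w))"
proof (induction "length w" arbitrary: w g rule: less_induct)
  case less
  show ?case
  proof (cases "w = []")
    case True
    then show ?thesis
      by (simp add: group_sum_def)
  next
    case False
    with less.prems have "hd w = LY"
      by simp
    with False obtain y x r where decomp: "w = y @ x @ r" "y \<noteq> []" "set y \<subseteq> {LY}" "set x \<subseteq> {LX}"
      "r = [] \<or> hd r = LY" "r \<noteq> [] \<Longrightarrow> x \<noteq> []" and pp: "parse_pairs w = (y, x) # parse_pairs r"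
      by (rule parse_pairs_ConsE) auto
    have "group_sum \<psi> g (parse_pairs w)
        = pc (g [y]) * Epsi \<psi> (x @ r) + group_sum \<psi> (\<lambda>ts. g (y # x # ts)) (parse_pairs r)"
      using decomp(4,5) by (simp add: pp group_sum_Cons Epsi_LX_block_append mult.assoc)
    also have "group_sum \<psi> (\<lambda>ts. g (y # x # ts)) (parse_pairs r)
        = (\<Sum>k\<in>LY_block_ends r. pc (g (y # x # blocks (take k r))) * Epsi \<psi> (drop k r))"
      using less.hyps[of r] decomp by simp
    also have "pc (g [y]) * Epsi \<psi> (x @ r) + \<dots>
        = (\<Sum>k\<in>LY_block_ends w. pc (g (blocks (take k w))) * Epsi \<psi> (drop k w))"
      unfolding decomp(1) by (rule sum_LY_block_ends_decomp[OF decomp(2-6), symmetric])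
    finally show ?thesis .
  qed
qed

lemma Epsi_LY_recursion:
  assumes "w \<noteq> []" "hd w = LY"
  shows "Epsi \<psi> w = (\<Sum>k\<in>cuts_leaving LY w. pc (bblock \<psi> LY (take k w)) * Epsi \<psi> (drop k w))"
proof -
  have "parse_pairs w \<noteq> []"
    using assms(1) by (subst parse_pairs.simps) (simp add: Let_def)
  moreover have "takeWhile (\<lambda>c. c = LX) w = []" "dropWhile (\<lambda>c. c = LX) w = w"
    using assms by (cases w; simp)+
  ultimately have "Epsi \<psi> w = group_sum \<psi> (bcum \<psi>) (parse_pairs w)"
    by (simp add: Epsi_def Ggrp_eq_group_sum)
  also have "\<dots> = (\<Sum>k\<in>LY_block_ends w. pc (bcum \<psi> (blocks (take k w))) * Epsi \<psi> (drop k w))"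
    using assms by (simp add: group_sum_parse_pairs)
  also have "\<dots> = (\<Sum>k\<in>cuts_leaving LY w. pc (bblock \<psi> LY (take k w)) * Epsi \<psi> (drop k w))"
  proof (rule sum.mono_neutral_cong_left)
    show "LY_block_ends w \<subseteq> cuts_leaving LY w"
      by (auto simp: LY_block_ends_def cuts_leaving_def)
    show "\<forall>k\<in>cuts_leaving LY w - LY_block_ends w. pc (bblock \<psi> LY (take k w)) * Epsi \<psi> (drop k w) = 0"
      by (auto simp: LY_block_ends_def cuts_leaving_def bblock_def last_take_nth letter_neq_iff)
    show "pc (bcum \<psi> (blocks (take k w))) * Epsi \<psi> (drop k w)
        = pc (bblock \<psi> LY (take k w)) * Epsi \<psi> (drop k w)" if "k \<in> LY_block_ends w" for k
      using that assms by (auto simp: LY_block_ends_def bblock_def last_take_nth)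
  qed simp
  finally show ?thesis .
qed

section \<open>Identities between word coefficients\<close>

definition word_delta :: "letter list \<Rightarrow> ncpoly" where
  "word_delta u = (if u = [] then 1 else 0)"

definition word_conv :: "(letter list \<Rightarrow> ncpoly) \<Rightarrow> (letter list \<Rightarrow> ncpoly) \<Rightarrow> letter list \<Rightarrow> ncpoly" where
  "word_conv f g w = (\<Sum>j\<le>length w. f (take j w) * g (drop j w))"

text \<open>The word coefficients of \<open>z (A F\<^sub>X + B F\<^sub>Y)\<close>, with \<open>F\<^sub>X\<close> taken w.r.t. \<open>\<theta>\<^sub>X\<close> and \<open>F\<^sub>Y\<close> w.r.t. \<open>\<theta>\<^sub>Y\<close>,
  and of \<open>z (A X + B F\<^sub>Y)\<close>.\<close>
definition delta_coeff :: "(letter list \<Rightarrow> complex) \<Rightarrow> (letter list \<Rightarrow> complex) \<Rightarrow> letter list \<Rightarrow> ncpoly" where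
  "delta_coeff \<theta>\<^sub>X \<theta>\<^sub>Y u = (case u of [] \<Rightarrow> 0 | c # _ \<Rightarrow> pc (bdelta (if c = LX then \<theta>\<^sub>X else \<theta>\<^sub>Y) c u))"

definition delta_coeff_X :: "(letter list \<Rightarrow> complex) \<Rightarrow> letter list \<Rightarrow> ncpoly" where
  "delta_coeff_X \<theta>\<^sub>Y u = (case u of [] \<Rightarrow> 0
     | c # v \<Rightarrow> if c = LX then (if v = [] then mono [LX] else 0) else pc (bdelta \<theta>\<^sub>Y LY u))"

lemma delta_coeff_Nil [simp]: "delta_coeff \<theta>\<^sub>X \<theta>\<^sub>Y [] = 0"
  by (simp add: delta_coeff_def)

lemma delta_coeff_X_Nil [simp]: "delta_coeff_X \<theta>\<^sub>Y [] = 0"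
  by (simp add: delta_coeff_X_def)

lemma word_conv_word_delta_minus:
  assumes "g [] = 0"
  shows "word_conv (\<lambda>u. word_delta u - g u) f w = f w - (\<Sum>j\<in>{1..length w}. g (take j w) * f (drop j w))"
proof -
  have "{..length w} = insert 0 {1..length w}"
    by auto
  then show ?thesis
    using assms by (simp add: word_conv_def word_delta_def left_diff_distrib sum_subtractf)
qed

lemma take_Cons_pos: "0 < j \<Longrightarrow> take j (c # t) = c # take (j - 1) t"
  by (cases j) auto

context
  fixes \<phi> \<psi> :: "letter list \<Rightarrow> complex"
  assumes cfree: "cfree \<phi> \<psi>" and \<phi>_Nil: "\<phi> [] = 1" and \<psi>_Nil: "\<psi> [] = 1"
begin

interpretation \<phi>: hd_last_cumulants \<phi>
  by (rule hd_last_cumulants_phi[OF cfree \<phi>_Nil \<psi>_Nil])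

interpretation \<psi>: hd_last_cumulants \<psi>
  by (rule hd_last_cumulants_psi[OF cfree \<psi>_Nil])

lemma word_conv_Ephi_eq_word_conv_Epsi:
  "word_conv (\<lambda>u. word_delta u - delta_coeff \<phi> \<phi> u) (Ephi \<phi> \<psi>) w
     = word_conv (\<lambda>u. word_delta u - delta_coeff \<phi> \<psi> u) (Epsi \<psi>) w"
proof (cases w)
  case Nil
  then show ?thesis
    by (simp add: word_conv_def word_delta_def delta_coeff_def)
next
  case (Cons c t)
  have coeff: "(\<Sum>j\<in>{1..length w}. delta_coeff \<theta>\<^sub>X \<theta>\<^sub>Y (take j w) * f (drop j w))
      = (\<Sum>j\<in>{1..length w}. pc (bdelta (if c = LX then \<theta>\<^sub>X else \<theta>\<^sub>Y) c (take j w)) * f (drop j w))"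
    for \<theta>\<^sub>X \<theta>\<^sub>Y f
    by (intro sum.cong) (auto simp: Cons take_Cons_pos delta_coeff_def)
  show ?thesis
  proof (cases c)
    case LX
    have "Ephi \<phi> \<psi> w - Epsi \<psi> w = (\<Sum>k\<in>{1..length w}.
        pc (bdelta \<phi> LX (take k w)) * (Ephi \<phi> \<psi> (drop k w) - Epsi \<psi> (drop k w)))"
      using Cons LX by (intro \<phi>.bdelta_expansion_from_bblock Ephi_minus_Epsi_LX_recursion) auto
    then show ?thesis
      unfolding word_conv_word_delta_minus[of "delta_coeff _ _", OF delta_coeff_Nil] coeff
      using LX by (simp add: right_diff_distrib sum_subtractf algebra_simps)
  next
    case LY
    have "Ephi \<phi> \<psi> w = (\<Sum>k\<in>{1..length w}. pc (bdelta \<phi> LY (take k w)) * Ephi \<phi> \<psi> (drop k w))"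
      using Cons LY by (intro \<phi>.bdelta_expansion_from_bblock Ephi_LY_recursion) auto
    moreover have "Epsi \<psi> w = (\<Sum>k\<in>{1..length w}. pc (bdelta \<psi> LY (take k w)) * Epsi \<psi> (drop k w))"
      using Cons LY by (intro \<psi>.bdelta_expansion_from_bblock Epsi_LY_recursion) auto
    ultimately show ?thesis
      unfolding word_conv_word_delta_minus[of "delta_coeff _ _", OF delta_coeff_Nil] coeff
      using LY by simp
  qed
qed

lemma word_conv_Epsi_eq_word_delta:
  "word_conv (\<lambda>u. word_delta u - delta_coeff_X \<psi> u) (Epsi \<psi>) w = word_delta w"
proof (cases w)
  case Nil
  then show ?thesis
    by (simp add: word_conv_def word_delta_def)
next
  case (Cons c t)
  show ?thesis
  proof (cases c)
    case LX
    have "(\<Sum>j\<in>{1..length w}. delta_coeff_X \<psi> (take j w) * Epsi \<psi> (drop j w))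
        = (\<Sum>j\<in>{1..length w}. if j = 1 then mono [LX] * Epsi \<psi> t else 0)"
      by (intro sum.cong) (auto simp: Cons LX take_Cons_pos delta_coeff_X_def)
    also have "\<dots> = Epsi \<psi> w"
      by (simp add: Cons LX Epsi_Cons_LX Suc_le_eq)
    finally show ?thesis
      unfolding word_conv_word_delta_minus[of "delta_coeff_X \<psi>", OF delta_coeff_X_Nil]
      by (simp add: Cons word_delta_def)
  next
    case LY
    have "(\<Sum>j\<in>{1..length w}. delta_coeff_X \<psi> (take j w) * Epsi \<psi> (drop j w))
        = (\<Sum>j\<in>{1..length w}. pc (bdelta \<psi> LY (take j w)) * Epsi \<psi> (drop j w))"
      by (intro sum.cong) (auto simp: Cons LY take_Cons_pos delta_coeff_X_def)
    also have "\<dots> = Epsi \<psi> w"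
      using Cons LY by (intro \<psi>.bdelta_expansion_from_bblock[symmetric] Epsi_LY_recursion) auto
    finally show ?thesis
      unfolding word_conv_word_delta_minus[of "delta_coeff_X \<psi>", OF delta_coeff_X_Nil]
      by (simp add: Cons word_delta_def)
  qed
qed

end

section \<open>Inverses of matrix power series\<close>

lemma matrix_add_rdistrib: "((M::'a::semiring_1^'n^'m) + N) ** P = M ** P + N ** P"
  by (simp add: vec_eq_iff matrix_matrix_mult_def distrib_right sum.distrib)

lemma matrix_sum_mult: "(\<Sum>x\<in>S. f x) ** (M::'a::semiring_1^'p^'n) = (\<Sum>x\<in>S. (f x :: 'a^'n^'m) ** M)"
  by (induction S rule: infinite_finite_induct) (auto simp: matrix_add_rdistrib)

lemma matrix_mult_sum: "(M::'a::semiring_1^'n^'m) ** (\<Sum>x\<in>S. f x) = (\<Sum>x\<in>S. M ** (f x :: 'a^'p^'n))"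
  by (induction S rule: infinite_finite_induct) (auto simp: matrix_add_ldistrib)

lemma smult_sone_left [simp]: "smult sone P = P"
proof (intro ext)
  fix k
  have "smult sone P k = (\<Sum>i\<le>k. if i = 0 then P k else 0)"
    unfolding smult_def by (rule sum.cong) (auto simp: sone_def)
  then show "smult sone P k = P k"
    by simp
qed

lemma smult_sone_right [simp]: "smult P sone = P"
proof (intro ext)
  fix k
  have "smult P sone k = (\<Sum>i\<le>k. if i = k then P k else 0)"
    unfolding smult_def by (rule sum.cong) (auto simp: sone_def)
  then show "smult P sone k = P k"
    by simp
qed

lemma smult_assoc: "smult (smult P Q) R = smult P (smult Q R)"
proof (intro ext)
  fix k
  define F where "F j q = P j ** Q q ** R (k - j - q)" for j q
  have "smult (smult P Q) R k = (\<Sum>i\<le>k. \<Sum>j\<le>i. F j (i - j))"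
    unfolding smult_def F_def by (simp add: matrix_sum_mult diff_diff_add)
  also have "\<dots> = (\<Sum>(j, q)\<in>{(j, q). j + q \<le> k}. F j q)"
    by (rule sum.triangle_reindex_eq[symmetric])
  also have "\<dots> = (\<Sum>(j, q)\<in>(SIGMA j:{..k}. {..k - j}). F j q)"
    by (rule sum.cong) auto
  also have "\<dots> = (\<Sum>j\<le>k. \<Sum>q\<le>k - j. F j q)"
    by (rule sum.Sigma[symmetric]) auto
  also have "\<dots> = smult P (smult Q R) k"
    unfolding smult_def F_def by (simp add: matrix_mult_sum matrix_mul_assoc)
  finally show "smult (smult P Q) R k = smult P (smult Q R) k" .
qed
function rinv :: "'n::finite mps \<Rightarrow> nat \<Rightarrow> ncpoly^'n^'n" where
  "rinv P k = (if k = 0 then mat 1 else - (\<Sum>i\<in>{1..k}. P i ** rinv P (k - i)))"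
  by auto
termination
  by (relation "Wellfounded.measure snd") auto

declare rinv.simps [simp del]

lemma rinv_0 [simp]: "rinv P 0 = mat 1"
  by (subst rinv.simps) simp

lemma smult_rinv:
  assumes "P 0 = mat 1"
  shows "smult P (rinv P) = sone"
proof (intro ext)
  fix k
  show "smult P (rinv P) k = sone k"
  proof (cases "k = 0")
    case True
    then show ?thesis
      using assms by (simp add: smult_def sone_def)
  next
    case False
    have "{..k} = insert 0 {1..k}"
      by auto
    then have "smult P (rinv P) k = P 0 ** rinv P k + (\<Sum>i\<in>{1..k}. P i ** rinv P (k - i))"
      by (simp add: smult_def)
    also have "\<dots> = 0"
      using False assms by (subst (1) rinv.simps) simp
    finally show ?thesis
      using False by (simp add: sone_def)
  qed
qed
lemma rinv_smult:
  assumes "P 0 = mat 1"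
  shows "smult (rinv P) P = sone"
proof -
  have rinv_rinv: "smult (rinv P) (rinv (rinv P)) = sone"
    by (simp add: smult_rinv)
  have "P = smult (smult P (rinv P)) (rinv (rinv P))"
    by (simp add: smult_assoc rinv_rinv)
  also have "\<dots> = rinv (rinv P)"
    by (simp add: smult_rinv[of P, OF assms])
  finally show ?thesis
    using rinv_rinv by simp
qed
lemma sinv_unique:
  assumes "P 0 = mat 1" "smult P Q = sone"
  shows "sinv P = Q"
proof -
  have right_inverse_eq: "Q' = rinv P" if "smult P Q' = sone" for Q'
  proof -
    have "Q' = smult (smult (rinv P) P) Q'"
      by (simp add: rinv_smult[of P, OF assms(1)])
    also have "\<dots> = rinv P"
      by (simp add: smult_assoc that)
    finally show ?thesis .
  qed
  have "sinv P = rinv P"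
    unfolding sinv_def
  proof (rule the_equality)
    show "smult P (rinv P) = sone \<and> smult (rinv P) P = sone"
      using smult_rinv[of P] rinv_smult[of P] assms(1) by blast
    show "Q' = rinv P" if "smult P Q' = sone \<and> smult Q' P = sone" for Q'
      using that right_inverse_eq by blast
  qed
  then show ?thesis
    using right_inverse_eq[OF assms(2)] by simp
qed

lemma sinv_smult:
  assumes "P 0 = mat 1"
  shows "smult (sinv P) P = sone"
  using sinv_unique[OF assms smult_rinv[of P, OF assms]] rinv_smult[of P, OF assms] by simp

section \<open>Generating series over words\<close>

instance letter :: finite
proof
  show "finite (UNIV :: letter set)"
    by (rule finite_subset[of _ "{LX, LY}"]) (use letter.exhaust in auto)
qed

fun mat_word :: "complex^'n::finite^'n \<Rightarrow> complex^'n^'n \<Rightarrow> letter list \<Rightarrow> complex^'n^'n" where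
  "mat_word A B [] = mat 1"
| "mat_word A B (c # w) = (if c = LX then A else B) ** mat_word A B w"

lemma mat_word_append: "mat_word A B (u @ v) = mat_word A B u ** mat_word A B v"
  by (induction u) (auto simp: matrix_mul_assoc)

definition word_series ::
    "complex^'n::finite^'n \<Rightarrow> complex^'n^'n \<Rightarrow> (letter list \<Rightarrow> ncpoly) \<Rightarrow> 'n mps" where
  "word_series A B f k = (\<chi> i j. \<Sum>w | length w = k. pc (mat_word A B w $ i $ j) * f w)"

lemma sum_length_Suc:
  "(\<Sum>v | length v = Suc k. F v) = (\<Sum>w | length w = k. F (LX # w)) + (\<Sum>w | length w = k. F (LY # w))"
proof -
  have "{v. length v = Suc k} = Cons LX ` {w. length w = k} \<union> Cons LY ` {w. length w = k}"
    by (auto simp: length_Suc_conv image_iff intro: letter.exhaust)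
  moreover have "Cons LX ` {w. length w = k} \<inter> Cons LY ` {w. length w = k} = {}"
    by auto
  ultimately show ?thesis
    by (simp add: sum.union_disjoint finite_list_length sum.reindex)
qed

lemma sum_length_split:
  assumes "a \<le> k"
  shows "(\<Sum>w | length w = k. G (take a w) (drop a w)) = (\<Sum>u | length u = a. \<Sum>v | length v = k - a. G u v)"
proof -
  have "(\<Sum>w | length w = k. G (take a w) (drop a w))
      = (\<Sum>p\<in>{u. length u = a} \<times> {v. length v = k - a}. G (fst p) (snd p))"
    by (rule sum.reindex_bij_witness[where i = "\<lambda>p. fst p @ snd p" and j = "\<lambda>w. (take a w, drop a w)"])
       (use assms in auto)
  then show ?thesis
    by (simp add: sum.cartesian_product split_def)
qed

lemma pc_matrix_mult_entry: "pc ((C ** D) $ i $ j) = (\<Sum>l\<in>UNIV. pc (C $ i $ l) * pc (D $ l $ j))"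
  by (simp add: matrix_matrix_mult_def pc_sum pc_mult)


lemma matrix_mult_word_series_entry:
  "(word_series A B f a ** word_series A B g b) $ i $ j
     = (\<Sum>u | length u = a. \<Sum>v | length v = b. pc (mat_word A B (u @ v) $ i $ j) * (f u * g v))"
proof -
  have reorder: "pc c * p * (pc d * q) = pc c * pc d * (p * q)" for c d p q
  proof -
    have "p * (pc d * q) = pc d * (p * q)"
      by (simp only: mult.assoc[symmetric] pc_central[of d p])
    then show ?thesis
      by (simp add: mult.assoc)
  qed
  have "(word_series A B f a ** word_series A B g b) $ i $ j
      = (\<Sum>l\<in>UNIV. \<Sum>u | length u = a. \<Sum>v | length v = b.
           pc (mat_word A B u $ i $ l) * pc (mat_word A B v $ l $ j) * (f u * g v))"
    by (simp add: matrix_matrix_mult_def word_series_def sum_product reorder)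
  also have "\<dots> = (\<Sum>u | length u = a. \<Sum>v | length v = b. \<Sum>l\<in>UNIV.
           pc (mat_word A B u $ i $ l) * pc (mat_word A B v $ l $ j) * (f u * g v))"
    by (subst sum.swap) (rule sum.cong[OF refl], rule sum.swap)
  finally show ?thesis
    by (simp add: mat_word_append pc_matrix_mult_entry sum_distrib_right)
qed

lemma word_series_mult: "smult (word_series A B f) (word_series A B g) = word_series A B (word_conv f g)"
proof (intro ext)
  fix k
  have "smult (word_series A B f) (word_series A B g) k $ i $ j = word_series A B (word_conv f g) k $ i $ j"
    for i j
  proof -
    have "(word_series A B f a ** word_series A B g (k - a)) $ i $ j
        = (\<Sum>w | length w = k. pc (mat_word A B w $ i $ j) * (f (take a w) * g (drop a w)))" if "a \<le> k" for a
      using sum_length_split[OF that, where G = "\<lambda>u v. pc (mat_word A B (u @ v) $ i $ j) * (f u * g v)"]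
      by (simp add: matrix_mult_word_series_entry)
    then have "smult (word_series A B f) (word_series A B g) k $ i $ j
        = (\<Sum>a\<le>k. \<Sum>w | length w = k. pc (mat_word A B w $ i $ j) * (f (take a w) * g (drop a w)))"
      by (simp add: smult_def)
    also have "\<dots> = word_series A B (word_conv f g) k $ i $ j"
      by (subst sum.swap) (simp add: word_series_def word_conv_def sum_distrib_left)
    finally show ?thesis .
  qed
  then show "smult (word_series A B f) (word_series A B g) k = word_series A B (word_conv f g) k"
    by (simp add: vec_eq_iff)
qed

lemma word_series_word_delta: "word_series A B word_delta = sone"
proof (intro ext)
  fix k
  have "word_series A B word_delta k $ i $ j = sone k $ i $ j" for i j
    by (cases k) (auto simp: word_series_def word_delta_def sone_def mat_def intro!: sum.neutral)
  then show "word_series A B word_delta k = sone k"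
    by (simp add: vec_eq_iff)
qed

lemma word_series_diff: "word_series A B (\<lambda>w. f w - g w) k = word_series A B f k - word_series A B g k"
  by (simp add: word_series_def vec_eq_iff right_diff_distrib sum_subtractf)

lemma word_series_Suc:
  "word_series A B f (Suc m) $ i $ j = (\<Sum>w | length w = m. pc ((A ** mat_word A B w) $ i $ j) * f (LX # w))
     + (\<Sum>w | length w = m. pc ((B ** mat_word A B w) $ i $ j) * f (LY # w))"
  by (simp add: word_series_def sum_length_Suc)

lemma mono_letter_mult: "mono [a] * (pc c * mono w) = pc c * mono (a # w)"
  by (metis mult.assoc pc_central mono_mult append_Cons append_Nil)

lemma Psi_eq_word_series: "Psi A B k = word_series A B mono k"
proof (induction k)
  case 0
  show ?case
    by (simp add: Psi_def word_series_def mat_def vec_eq_iff)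
next
  case (Suc k)
  have "(AXBY A B ** word_series A B mono k) $ i $ j = word_series A B mono (Suc k) $ i $ j" for i j
  proof -
    have "(AXBY A B ** word_series A B mono k) $ i $ j
        = (\<Sum>l\<in>UNIV. \<Sum>w | length w = k. pc (A $ i $ l) * pc (mat_word A B w $ l $ j) * mono (LX # w)
                                       + pc (B $ i $ l) * pc (mat_word A B w $ l $ j) * mono (LY # w))"
      by (simp add: matrix_matrix_mult_def AXBY_def word_series_def distrib_right sum_distrib_left
          sum.distrib mult.assoc mono_letter_mult)
    also have "\<dots> = word_series A B mono (Suc k) $ i $ j"
      by (simp add: word_series_Suc sum.distrib sum.swap[of _ UNIV] pc_matrix_mult_entry sum_distrib_right)
    finally show ?thesis .
  qed
  moreover have "Psi A B (Suc k) = AXBY A B ** word_series A B mono k"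
    using Suc by (simp add: Psi_def)
  ultimately show ?case
    by (simp add: vec_eq_iff)
qed

lemma mapm_linP_Psi: "(\<lambda>k. mapm (linP f) (Psi A B k)) = word_series A B f"
  by (intro ext) (simp add: Psi_eq_word_series mapm_def word_series_def vec_eq_iff linP_sum linP_scale linP_mono)

lemma Fd_entry: "Fd \<theta> a A B m $ l $ j = (\<Sum>w | length w = m. mat_word A B w $ l $ j * bdelta \<theta> a (a # w))"
  by (simp add: Fd_def mapm_def Psi_eq_word_series word_series_def sum_distrib_left mono_letter_mult
      lin_sum lin_scale lin_mono)

lemma liftm_mult_Fd_entry:
  "(liftm C ** liftm (Fd \<theta> a A B m)) $ i $ j
     = (\<Sum>w | length w = m. pc ((C ** mat_word A B w) $ i $ j) * pc (bdelta \<theta> a (a # w)))"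
proof -
  have "(liftm C ** liftm (Fd \<theta> a A B m)) $ i $ j = pc (\<Sum>l\<in>UNIV. C $ i $ l * Fd \<theta> a A B m $ l $ j)"
    by (simp add: matrix_matrix_mult_def liftm_def mapm_def pc_sum pc_mult)
  also have "(\<Sum>l\<in>UNIV. C $ i $ l * Fd \<theta> a A B m $ l $ j)
      = (\<Sum>w | length w = m. (C ** mat_word A B w) $ i $ j * bdelta \<theta> a (a # w))"
    by (simp add: Fd_entry matrix_matrix_mult_def sum_distrib_left sum_distrib_right mult.assoc
        sum.swap[of _ UNIV])
  finally show ?thesis
    by (simp add: pc_sum pc_mult)
qed

lemma word_series_0: "f [] = 0 \<Longrightarrow> word_series A B f 0 = 0"
  by (simp add: word_series_def vec_eq_iff)

lemma word_series_delta_coeff: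
  "(\<lambda>k. sone k - zs (\<lambda>m. liftm A ** liftm (Fd \<theta>\<^sub>X LX A B m) + liftm B ** liftm (Fd \<theta>\<^sub>Y LY A B m)) k)
     = word_series A B (\<lambda>u. word_delta u - delta_coeff \<theta>\<^sub>X \<theta>\<^sub>Y u)"
proof (intro ext)
  fix k
  have "zs (\<lambda>m. liftm A ** liftm (Fd \<theta>\<^sub>X LX A B m) + liftm B ** liftm (Fd \<theta>\<^sub>Y LY A B m)) k
      = word_series A B (delta_coeff \<theta>\<^sub>X \<theta>\<^sub>Y) k"
    by (cases k) (simp_all add: zs_def word_series_0 vec_eq_iff word_series_Suc liftm_mult_Fd_entry delta_coeff_def)
  then show "sone k - zs (\<lambda>m. liftm A ** liftm (Fd \<theta>\<^sub>X LX A B m) + liftm B ** liftm (Fd \<theta>\<^sub>Y LY A B m)) k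
      = word_series A B (\<lambda>u. word_delta u - delta_coeff \<theta>\<^sub>X \<theta>\<^sub>Y u) k"
    by (simp add: word_series_diff word_series_word_delta)
qed

lemma word_series_delta_coeff_X:
  "(\<lambda>k. sone k - zs (\<lambda>m. (if m = 0 then (\<chi> i j. pc (A $ i $ j) * mono [LX]) else 0)
                          + liftm B ** liftm (Fd \<theta>\<^sub>Y LY A B m)) k)
     = word_series A B (\<lambda>u. word_delta u - delta_coeff_X \<theta>\<^sub>Y u)"
proof (intro ext)
  fix k
  have X_part: "(\<Sum>w | length w = m. pc ((A ** mat_word A B w) $ i $ j) * (if w = [] then mono [LX] else 0))
      = (if m = 0 then pc (A $ i $ j) * mono [LX] else 0)" for m i j
    by (cases m) (auto intro!: sum.neutral)
  have "zs (\<lambda>m. (if m = 0 then (\<chi> i j. pc (A $ i $ j) * mono [LX]) else 0)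
               + liftm B ** liftm (Fd \<theta>\<^sub>Y LY A B m)) k
      = word_series A B (delta_coeff_X \<theta>\<^sub>Y) k"
    by (cases k) (simp_all add: zs_def word_series_0 vec_eq_iff word_series_Suc liftm_mult_Fd_entry
        delta_coeff_X_def X_part)
  then show "sone k - zs (\<lambda>m. (if m = 0 then (\<chi> i j. pc (A $ i $ j) * mono [LX]) else 0)
                             + liftm B ** liftm (Fd \<theta>\<^sub>Y LY A B m)) k
      = word_series A B (\<lambda>u. word_delta u - delta_coeff_X \<theta>\<^sub>Y u) k"
    by (simp add: word_series_diff word_series_word_delta)
qed

lemma word_series_0_word_delta_minus: "f [] = 0 \<Longrightarrow> word_series A B (\<lambda>u. word_delta u - f u) 0 = mat 1"
  by (simp add: word_series_def word_delta_def mat_def vec_eq_iff)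

theorem theorem6:
  fixes \<phi> \<psi> :: "letter list \<Rightarrow> complex" and A B :: "complex^'n^'n"
  assumes "\<phi> [] = 1" and "\<psi> [] = 1" and "cfree \<phi> \<psi>"
  shows "(\<lambda>k. mapm (linP (Ephi \<phi> \<psi>)) (Psi A B k)) =
    smult
      (sinv (\<lambda>k. sone k - zs (\<lambda>m. liftm A ** liftm (Fd \<phi> LX A B m)
                                  + liftm B ** liftm (Fd \<phi> LY A B m)) k))
      (smult
        (\<lambda>k. sone k - zs (\<lambda>m. liftm A ** liftm (Fd \<phi> LX A B m)
                               + liftm B ** liftm (Fd \<psi> LY A B m)) k)
        (sinv (\<lambda>k. sone k - zs (\<lambda>m. (if m = 0 then (\<chi> i j. pc (A $ i $ j) * mono [LX]) else 0)
                                    + liftm B ** liftm (Fd \<psi> LY A B m)) k)))"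
proof -
  let ?S = "word_series A B"
  let ?P1 = "?S (\<lambda>u. word_delta u - delta_coeff \<phi> \<phi> u)"
  let ?P2 = "?S (\<lambda>u. word_delta u - delta_coeff \<phi> \<psi> u)"
  let ?P3 = "?S (\<lambda>u. word_delta u - delta_coeff_X \<psi> u)"
  have P1_left_inverse: "smult (sinv ?P1) ?P1 = sone"
    by (rule sinv_smult) (simp add: word_series_0_word_delta_minus)
  have P1_Ephi: "smult ?P1 (?S (Ephi \<phi> \<psi>)) = smult ?P2 (?S (Epsi \<psi>))"
    unfolding word_series_mult
    by (intro arg_cong[where f = ?S] ext word_conv_Ephi_eq_word_conv_Epsi[OF assms(3,1,2)])
  have "smult ?P3 (?S (Epsi \<psi>)) = sone"
    unfolding word_series_mult word_series_word_delta[of A B, symmetric]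
    by (intro arg_cong[where f = ?S] ext word_conv_Epsi_eq_word_delta[OF assms(3,1,2)])
  then have P3_inverse: "sinv ?P3 = ?S (Epsi \<psi>)"
    by (intro sinv_unique) (simp_all add: word_series_0_word_delta_minus)
  have "?S (Ephi \<phi> \<psi>) = smult (smult (sinv ?P1) ?P1) (?S (Ephi \<phi> \<psi>))"
    by (simp add: P1_left_inverse)
  also have "\<dots> = smult (sinv ?P1) (smult ?P2 (sinv ?P3))"
    by (simp add: smult_assoc P1_Ephi P3_inverse)
  finally show ?thesis
    by (simp only: mapm_linP_Psi word_series_delta_coeff word_series_delta_coeff_X)
qed

end
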